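(* Let $0\le\eta<1$, $m\in\mathbb{N}$, $n\in\mathbb{N}_0$, $m>n$. If $f_{m,j}\in\overline{S}H(m,n,\eta)$ for $j=1,2,\dots$, with $f_{m,j}(z)=z-\sum_{k=2}^{\infty}|a_{k,j}|z^k+(-1)^{m-1}\sum_{k=1}^{\infty}|b_{k,j}|\overline{z}^k$, and $t_j\ge0$ with $\sum_{j=1}^{\infty}t_j=1$, then $\sum_{j=1}^{\infty}t_jf_{m,j}\in\overline{S}H(m,n,\eta)$. That is, $\overline{S}H(m,n,\eta)$ is closed under convex combination.
   Context: Fix real parameters $\alpha,\beta,\gamma,\delta>0$ and $p,q>0$ with $q\le \alpha+p$. For an integer $m\ge 0$ define $C_1(m)=1$ and, for $k\ge 2$, $$C_k(m)=\frac{(m+1)_{k-1}}{(k-1)!}\cdot\frac{\Gamma(\gamma+q(k-1))/\Gamma(\gamma)}{\Gamma(\beta+\alpha(k-1))\,\Gamma(\delta+p(k-1))/\Gamma(\delta)},$$ where $(x)_j=\Gamma(x+j)/\Gamma(x)$. For analytic $\varphi(z)=\sum_{k\ge1}c_kz^k$ on $U=\{|z|<1\}$ set $\Phi^m\varphi(z)=\sum_{k\ge1}C_k(m)c_kz^k$, and for harmonic $f=h+\overline{g}$ set $\Phi^m f=\Phi^m h+(-1)^m\overline{\Phi^m g}$. The class $SH(m,n,\eta)$ consists of harmonic $f=h+\overline g$, univalent and sense-preserving in $U$, with $h(z)=z+\sum_{k\ge2}a_kz^k$, $g(z)=\sum_{k\ge1}b_kz^k$, $|b_1|<1$, and $\operatorname{Re}\bigl(\Phi^m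 f/\Phi^n f\bigr)>\eta$ in $U$. The class $\overline{S}H(m,n,\eta)$ consists of those $f_m=h+\overline{g_m}\in SH(m,n,\eta)$ with $h(z)=z-\sum_{k\ge2}a_kz^k$, $g_m(z)=(-1)^{m-1}\sum_{k\ge1}b_kz^k$, $a_k,b_k\ge0$. *)

theory Defs
  imports "HOL-Analysis.Analysis"
begin

definition U :: "complex set" where "U = ball 0 1"

definition Ccoef :: "real \<Rightarrow> real \<Rightarrow> real \<Rightarrow> real \<Rightarrow> real \<Rightarrow> real \<Rightarrow> nat \<Rightarrow> nat \<Rightarrow> real" where
  "Ccoef al be ga de p q m k =
     (if k \<le> 1 then 1
      else pochhammer (real m + 1) (k - 1) / fact (k - 1) *
           ((Gamma (ga + q * real (k - 1)) / Gamma ga) /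
            (Gamma (be + al * real (k - 1)) * Gamma (de + p * real (k - 1)) / Gamma de)))"

definition ps :: "(nat \<Rightarrow> complex) \<Rightarrow> complex \<Rightarrow> complex" where
  "ps c z = (\<Sum>k. c k * z ^ k)"

definition Phi_ps :: "real \<Rightarrow> real \<Rightarrow> real \<Rightarrow> real \<Rightarrow> real \<Rightarrow> real \<Rightarrow> nat \<Rightarrow> (nat \<Rightarrow> complex) \<Rightarrow> complex \<Rightarrow> complex" where
  "Phi_ps al be ga de p q m c z = (\<Sum>k. complex_of_real (Ccoef al be ga de p q m k) * c k * z ^ k)"

definition Phi_harm :: "real \<Rightarrow> real \<Rightarrow> real \<Rightarrow> real \<Rightarrow> real \<Rightarrow> real \<Rightarrow> nat \<Rightarrow> (nat \<Rightarrow> complex) \<Rightarrow> (nat \<Rightarrow> complex) \<Rightarrow> complex \<Rightarrow> complex" where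
  "Phi_harm al be ga de p q m a b z =
     Phi_ps al be ga de p q m a z + (-1) ^ m * cnj (Phi_ps al be ga de p q m b z)"

definition SH :: "real \<Rightarrow> real \<Rightarrow> real \<Rightarrow> real \<Rightarrow> real \<Rightarrow> real \<Rightarrow> nat \<Rightarrow> nat \<Rightarrow> real \<Rightarrow> (complex \<Rightarrow> complex) \<Rightarrow> bool" where
  "SH al be ga de p q m n eta f \<longleftrightarrow>
     (\<exists>a b :: nat \<Rightarrow> complex.
        a 0 = 0 \<and> a 1 = 1 \<and> b 0 = 0 \<and> cmod (b 1) < 1 \<and>
        (\<forall>z\<in>U. summable (\<lambda>k. a k * z ^ k) \<and> summable (\<lambda>k. b k * z ^ k) \<and>
           (\<forall>r\<in>{m, n}. summable (\<lambda>k. complex_of_real (Ccoef al be ga de p q r k) * a k * z ^ k) \<and>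
                        summable (\<lambda>k. complex_of_real (Ccoef al be ga de p q r k) * b k * z ^ k))) \<and>
        (\<forall>z\<in>U. f z = ps a z + cnj (ps b z)) \<and>
        inj_on f U \<and>
        (\<forall>z\<in>U. cmod (deriv (ps b) z) < cmod (deriv (ps a) z)) \<and>
        (\<forall>z\<in>U - {0}. Re (Phi_harm al be ga de p q m a b z / Phi_harm al be ga de p q n a b z) > eta))"

definition SHbar :: "real \<Rightarrow> real \<Rightarrow> real \<Rightarrow> real \<Rightarrow> real \<Rightarrow> real \<Rightarrow> nat \<Rightarrow> nat \<Rightarrow> real \<Rightarrow> (complex \<Rightarrow> complex) \<Rightarrow> bool" where
  "SHbar al be ga de p q m n eta f \<longleftrightarrow>
     SH al be ga de p q m n eta f \<and>
     (\<exists>A B :: nat \<Rightarrow> real. (\<forall>k. A k \<ge> 0 \<and> B k \<ge> 0) \<and>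
        (\<forall>z\<in>U. f z = z - (\<Sum>k. complex_of_real (A (k + 2)) * z ^ (k + 2))
                     + cnj ((-1) ^ (m - 1) * (\<Sum>k. complex_of_real (B (k + 1)) * z ^ (k + 1)))))"

end

(* A harmonic f = h + cnj g with h = z - \<Sum> A k z^k and g = (-1)^(m-1) \<Sum> B k z^k, where A, B \<ge> 0,
   lies in SHbar(m,n,eta) iff its coefficients satisfy the linear conditions coeff_cond A B:
   \<Sum> k (A k + B k) \<le> 1 and \<Sum> (wA k A k + wB k B k) \<le> 1 - eta, strictly for the term k = 1.
   Necessity: on the segment [0,1) all series are real, so sense-preservation and
   Re (Phi^m f / Phi^n f) > eta become inequalities between real power series in r, and letting
   r tend to 1 yields the bounds.  Sufficiency: the first bound gives univalence and
   sense-preservation, the second gives the real-part condition by a direct estimate.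
   The coefficients of \<Sum> t j f j are the convex combinations of those of the f j, and the
   conditions are preserved under such combinations. *)

theory Submission
  imports Defs
begin

lemma shifted_powser_less:
  fixes w :: "nat \<Rightarrow> real"
  assumes nonneg: "\<And>k. w k \<ge> 0" and summable: "summable w" and w0: "w 0 = 0"
    and sum_le: "suminf w \<le> M" and w1: "w 1 < M" and \<rho>: "0 \<le> \<rho>" "\<rho> < 1"
  shows "summable (\<lambda>k. w (Suc k) * \<rho>^k)" and "(\<Sum>k. w (Suc k) * \<rho>^k) < M"
proof -
  define g where "g k = \<rho> * w (Suc k) + (if k = 0 then (1 - \<rho>) * w 1 else 0)" for k
  have summable_Suc: "summable (\<lambda>k. w (Suc k))" using summable by (simp add: summable_Suc_iff)
  have summable_g: "summable g" unfolding g_def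
    by (intro summable_add summable_mult summable_Suc summable_finite[of "{0}"]) auto
  have le_g: "norm (w (Suc k) * \<rho>^k) \<le> g k" for k
  proof (cases k)
    case 0
    then show ?thesis using nonneg[of 1] by (simp add: g_def algebra_simps)
  next
    case (Suc j)
    have "\<rho>^k \<le> \<rho>" using \<rho> Suc by (simp add: mult_left_le power_le_one)
    then have "w (Suc k) * \<rho>^k \<le> w (Suc k) * \<rho>" using nonneg[of "Suc k"] by (rule mult_left_mono)
    then show ?thesis using nonneg[of "Suc k"] \<rho> Suc by (simp add: g_def abs_mult mult.commute)
  qed
  show summable_w\<rho>: "summable (\<lambda>k. w (Suc k) * \<rho>^k)"
    by (rule summable_comparison_test[OF _ summable_g]) (use le_g in auto)
  have "(\<Sum>k. w (Suc k) * \<rho>^k) \<le> suminf g"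
    by (rule suminf_le[OF _ summable_w\<rho> summable_g]) (use le_g in \<open>auto intro: order_trans[OF abs_ge_self]\<close>)
  also have "suminf g = \<rho> * (\<Sum>k. w (Suc k)) + (1 - \<rho>) * w 1"
  proof -
    have "suminf g = (\<Sum>k. \<rho> * w (Suc k)) + (\<Sum>k. if k = 0 then (1 - \<rho>) * w 1 else 0)"
      unfolding g_def by (intro suminf_add[symmetric] summable_mult summable_Suc summable_finite[of "{0}"]) auto
    also have "(\<Sum>k. if k = 0 then (1 - \<rho>) * w 1 else 0) = (1 - \<rho>) * w 1"
      by (subst suminf_finite[of "{0}"]) auto
    finally show ?thesis by (simp add: suminf_mult summable_Suc)
  qed
  also have "(\<Sum>k. w (Suc k)) = suminf w" using suminf_split_head[OF summable] w0 by simp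
  also have "\<rho> * suminf w + (1 - \<rho>) * w 1 < M"
  proof -
    have "\<rho> * suminf w \<le> \<rho> * M" using sum_le \<rho> by (simp add: mult_left_mono)
    moreover have "(1 - \<rho>) * w 1 < (1 - \<rho>) * M" using w1 \<rho> by simp
    ultimately show ?thesis by (simp add: algebra_simps)
  qed
  finally show "(\<Sum>k. w (Suc k) * \<rho>^k) < M" .
qed

lemma bounded_of_shifted_powser_less:
  fixes w :: "nat \<Rightarrow> real"
  assumes nonneg: "\<And>k. w k \<ge> 0" and w0: "w 0 = 0"
    and less: "\<And>r. 0 < r \<Longrightarrow> r < 1 \<Longrightarrow> summable (\<lambda>k. w (Suc k) * r^k) \<and> (\<Sum>k. w (Suc k) * r^k) < M"
  shows "summable w" and "suminf w \<le> M" and "w 1 < M"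
proof -
  have partial_le: "(\<Sum>k<K. w (Suc k)) \<le> M" for K
  proof -
    have "eventually (\<lambda>r. (\<Sum>k<K. w (Suc k) * r^k) \<le> M) (at_left (1::real))"
    proof -
      have "eventually (\<lambda>r. r \<in> {0<..<(1::real)}) (at_left 1)"
        by (rule eventually_at_left_real) simp
      then show ?thesis
      proof eventually_elim
        case (elim r)
        have "(\<Sum>k<K. w (Suc k) * r^k) \<le> (\<Sum>k. w (Suc k) * r^k)"
          using less[of r] elim nonneg by (intro sum_le_suminf) auto
        then show ?case using less[of r] elim by simp
      qed
    qed
    moreover have "((\<lambda>r. \<Sum>k<K. w (Suc k) * r^k) \<longlongrightarrow> (\<Sum>k<K. w (Suc k) * 1^k)) (at_left (1::real))"
      by (intro tendsto_intros)
    ultimately have "(\<Sum>k<K. w (Suc k) * 1^k) \<le> M"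
      using tendsto_upperbound trivial_limit_at_left_real by blast
    then show ?thesis by simp
  qed
  have summable_Suc: "summable (\<lambda>k. w (Suc k))"
    by (rule summableI_nonneg_bounded[where x=M]) (use nonneg partial_le in auto)
  then show summable: "summable w" by (simp add: summable_Suc_iff)
  have "suminf w = (\<Sum>k. w (Suc k))" using suminf_split_head[OF summable] w0 by simp
  also have "\<dots> \<le> M" by (rule suminf_le_const[OF summable_Suc partial_le])
  finally show "suminf w \<le> M" .
  have "w 1 \<le> (\<Sum>k. w (Suc k) * (1/2)^k)"
    using sum_le_suminf[of "\<lambda>k. w (Suc k) * (1/2)^k" "{..<1}"] less[of "1/2"] nonneg by auto
  also have "\<dots> < M" using less[of "1/2"] by simp
  finally show "w 1 < M" .
qed

lemma real_powser_pos_if_nonzero: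
  fixes c :: "nat \<Rightarrow> real"
  assumes summable: "\<And>r. 0 \<le> r \<Longrightarrow> r < 1 \<Longrightarrow> summable (\<lambda>k. c k * r^k)"
    and c0: "c 0 > 0" and nonzero: "\<And>r. 0 \<le> r \<Longrightarrow> r < 1 \<Longrightarrow> (\<Sum>k. c k * r^k) \<noteq> 0"
    and r: "0 \<le> r" "r < 1"
  shows "(\<Sum>k. c k * r^k) > 0"
proof (rule ccontr)
  assume "\<not> (\<Sum>k. c k * r^k) > 0"
  moreover have "isCont (\<lambda>r. \<Sum>k. c k * r^k) x" if "0 \<le> x" "x \<le> r" for x
    by (rule isCont_powser[of c "(x + 1) / 2"]) (use summable that r in auto)
  ultimately obtain x where "0 \<le> x" "x \<le> r" "(\<Sum>k. c k * x^k) = 0"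
    using IVT2[of "\<lambda>r. \<Sum>k. c k * r^k" r 0 0] c0 r by force
  then show False using nonzero[of x] r by simp
qed

lemma real_powser_quotient_gt:
  fixes N D :: "nat \<Rightarrow> real"
  assumes summable_N: "\<And>r. 0 \<le> r \<Longrightarrow> r < 1 \<Longrightarrow> summable (\<lambda>k. N k * r^k)"
    and summable_D: "\<And>r. 0 \<le> r \<Longrightarrow> r < 1 \<Longrightarrow> summable (\<lambda>k. D k * r^k)"
    and N0: "N 0 = 0" and D0: "D 0 = 0" and D1: "D 1 > 0" and eta: "0 \<le> eta"
    and quotient: "\<And>r. 0 < r \<Longrightarrow> r < 1 \<Longrightarrow> (\<Sum>k. N k * r^k) / (\<Sum>k. D k * r^k) > eta"
    and r: "0 < r" "r < 1"
  shows "summable (\<lambda>k. (N (Suc k) - eta * D (Suc k)) * r^k)"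
    and "(\<Sum>k. (N (Suc k) - eta * D (Suc k)) * r^k) > 0"
proof -
  have D_split: "summable (\<lambda>k. D (Suc k) * x^k)" "(\<Sum>k. D k * x^k) = (\<Sum>k. D (Suc k) * x^k) * x"
    if "0 \<le> x" "x < 1" for x
    using powser_split_head[OF summable_D[OF that]] D0 by simp_all
  have D_pos: "(\<Sum>k. D (Suc k) * x^k) > 0" if "0 \<le> x" "x < 1" for x
  proof (rule real_powser_pos_if_nonzero[OF D_split(1) _ _ that])
    show "D (Suc 0) > 0" using D1 by simp
    show "(\<Sum>k. D (Suc k) * y^k) \<noteq> 0" if y: "0 \<le> y" "y < 1" for y
    proof (cases "y = 0")
      case False
      then show ?thesis using quotient[of y] y D_split(2)[OF y] eta by auto
    qed (use D1 in simp)
  qed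
  define E where "E k = N k - eta * D k" for k
  have "(\<Sum>k. D k * r^k) > 0"
    using D_split(2) D_pos r by simp
  then have "(\<Sum>k. N k * r^k) - eta * (\<Sum>k. D k * r^k) > 0"
    using quotient[OF r] by (simp add: field_simps)
  moreover have "(\<lambda>k. E k * r^k) sums ((\<Sum>k. N k * r^k) - eta * (\<Sum>k. D k * r^k))"
    unfolding E_def left_diff_distrib mult.assoc
    using summable_N summable_D r by (intro sums_diff sums_mult summable_sums) auto
  ultimately have "summable (\<lambda>k. E k * r^k)" and "(\<Sum>k. E k * r^k) > 0"
    by (simp_all add: sums_iff)
  then have "summable (\<lambda>k. E (Suc k) * r^k)" and "(\<Sum>k. E (Suc k) * r^k) * r > 0"
    using powser_split_head[of E r] N0 D0 by (simp_all add: E_def)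
  then show "summable (\<lambda>k. (N (Suc k) - eta * D (Suc k)) * r^k)"
    and "(\<Sum>k. (N (Suc k) - eta * D (Suc k)) * r^k) > 0"
    using r by (simp_all add: E_def zero_less_mult_iff)
qed

lemma powser_const_on_interval:
  fixes c :: "nat \<Rightarrow> complex"
  assumes \<rho>: "\<rho> > 0" and const: "\<And>r. 0 < r \<Longrightarrow> r < \<rho> \<Longrightarrow> (\<lambda>k. c k * of_real r ^ k) sums K"
  shows "c 0 = K" and "\<And>r. 0 < r \<Longrightarrow> r < \<rho> \<Longrightarrow> (\<lambda>k. c (Suc k) * of_real r ^ k) sums 0"
proof -
  have "summable (\<lambda>k. c k * of_real (\<rho>/2) ^ k)" using const[of "\<rho>/2"] \<rho> sums_summable by auto
  then have "isCont (\<lambda>\<zeta>. \<Sum>k. c k * \<zeta>^k) (of_real 0)"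
    by (rule isCont_powser) (use \<rho> in simp)
  then have "isCont (\<lambda>r. \<Sum>k. c k * (of_real r :: complex)^k) 0"
    by (rule isCont_o2[rotated]) (intro continuous_intros)
  then have "((\<lambda>r. \<Sum>k. c k * (of_real r :: complex)^k) \<longlongrightarrow> (\<Sum>k. c k * (of_real 0 :: complex)^k)) (at_right 0)"
    using continuous_at_imp_continuous_at_within continuous_within by blast
  then have "((\<lambda>r. \<Sum>k. c k * (of_real r :: complex)^k) \<longlongrightarrow> c 0) (at_right 0)"
    by simp
  moreover have "eventually (\<lambda>r. (\<Sum>k. c k * (of_real r :: complex)^k) = K) (at_right 0)"
  proof -
    have "eventually (\<lambda>r. r \<in> {0<..<\<rho>}) (at_right (0::real))"
      by (rule eventually_at_right_real) (use \<rho> in simp)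
    then show ?thesis by eventually_elim (use const in \<open>auto simp: sums_iff\<close>)
  qed
  then have "((\<lambda>r. \<Sum>k. c k * (of_real r :: complex)^k) \<longlongrightarrow> K) (at_right 0)"
    by (rule tendsto_eventually)
  ultimately show c0: "c 0 = K" by (rule tendsto_unique[rotated]) simp
  fix r :: real assume r: "0 < r" "r < \<rho>"
  have "(\<lambda>k. c (Suc k) * of_real r ^ Suc k) sums 0"
    using sums_Suc_iff[of "\<lambda>k. c k * of_real r ^ k" "K - c 0"] const[OF r] c0 by simp
  then have "(\<lambda>k. (c (Suc k) * of_real r ^ Suc k) / of_real r) sums (0 / of_real r)"
    by (rule sums_divide)
  then show "(\<lambda>k. c (Suc k) * of_real r ^ k) sums 0"
    using r by (simp add: field_simps)
qed

lemma powser_const_on_interval_coeff: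
  fixes c :: "nat \<Rightarrow> complex"
  assumes \<rho>: "\<rho> > 0" and const: "\<And>r. 0 < r \<Longrightarrow> r < \<rho> \<Longrightarrow> (\<lambda>k. c k * of_real r ^ k) sums K"
    and k: "k \<ge> 1"
  shows "c k = 0"
proof -
  have "\<forall>r. 0 < r \<longrightarrow> r < \<rho> \<longrightarrow> (\<lambda>i. c (i + Suc j) * of_real r ^ i) sums 0" for j
  proof (induction j)
    case 0
    then show ?case using powser_const_on_interval(2)[OF \<rho> const] by simp
  next
    case (Suc j)
    then show ?case using powser_const_on_interval(2)[of \<rho> "\<lambda>i. c (i + Suc j)" 0] \<rho> by simp
  qed
  moreover obtain j where "k = Suc j" using k by (cases k) auto
  ultimately show ?thesis
    using powser_const_on_interval(1)[of \<rho> "\<lambda>i. c (i + Suc j)" 0] \<rho> by simp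
qed

text \<open>Restricting to rays \<open>z = r w\<close> with \<open>w\<close> on the unit circle gives, for \<open>k \<ge> 1\<close>,
  \<open>\<alpha> k w^k + \<beta> k (cnj w)^k = 0\<close>; taking \<open>w = 1\<close> and \<open>w^k = \<i>\<close> separates \<open>\<alpha> k\<close> from \<open>\<beta> k\<close>.\<close>

lemma harmonic_powser_const_coeff:
  fixes \<alpha> \<beta> :: "nat \<Rightarrow> complex"
  assumes \<rho>: "\<rho> > 0"
    and const: "\<And>z. z \<noteq> 0 \<Longrightarrow> norm z < \<rho> \<Longrightarrow> (\<lambda>k. \<alpha> k * z^k + \<beta> k * cnj z ^ k) sums K"
    and k: "k \<ge> 1"
  shows "\<alpha> k = 0 \<and> \<beta> k = 0"
proof -
  have on_circle: "\<alpha> k * w^k + \<beta> k * cnj w ^ k = 0" if w: "norm w = 1" for w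
  proof (rule powser_const_on_interval_coeff[OF \<rho> _ k])
    fix r :: real assume r: "0 < r" "r < \<rho>"
    have "(\<lambda>k. \<alpha> k * (of_real r * w)^k + \<beta> k * cnj (of_real r * w) ^ k) sums K"
      using w r by (intro const) (auto simp: norm_mult)
    then show "(\<lambda>k. (\<alpha> k * w^k + \<beta> k * cnj w ^ k) * of_real r ^ k) sums K"
      by (simp add: power_mult_distrib algebra_simps)
  qed
  define w where "w = cis (pi / (2 * real k))"
  have "w ^ k = cis (real k * (pi / (2 * real k)))"
    unfolding w_def by (rule Complex.DeMoivre)
  also have "real k * (pi / (2 * real k)) = pi / 2"
    using k by simp
  finally have "w ^ k = \<i>"
    by simp
  then have "\<alpha> k * \<i> - \<beta> k * \<i> = 0"
    using on_circle[of w] by (simp add: w_def flip: complex_cnj_power)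
  moreover have "\<alpha> k + \<beta> k = 0" using on_circle[of 1] by simp
  ultimately show ?thesis by (auto simp: algebra_simps)
qed

lemma suminf_not_summable: "\<not> summable X \<Longrightarrow> suminf X = (THE s. False)"
proof -
  assume "\<not> summable X"
  then have "(\<lambda>s. X sums s) = (\<lambda>s. False)" by (auto simp: summable_def)
  then show ?thesis unfolding suminf_def by simp
qed

text \<open>The sums in the defining formula of \<open>SHbar\<close> are \<open>suminf\<close>s that need not converge; near \<open>0\<close>
  such a sum is either a genuine power series or the constant junk value of \<open>suminf\<close>.\<close>

lemma shifted_powser_near_0:
  fixes X :: "nat \<Rightarrow> real" and n :: nat
  shows "\<exists>\<rho> X' c. \<rho> > 0 \<and> (\<forall>k. X' k = 0 \<or> X' k = X k) \<and> (\<forall>k<n. X' k = 0) \<and>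
    (\<forall>z :: complex. z \<noteq> 0 \<longrightarrow> norm z < \<rho> \<longrightarrow>
       (\<lambda>k. of_real (X' k) * z^k) sums ((\<Sum>k. of_real (X (k + n)) * z^(k + n)) - c))"
proof (cases "\<exists>z0. z0 \<noteq> 0 \<and> summable (\<lambda>k. of_real (X (k + n)) * (z0::complex)^(k + n))")
  case True
  then obtain z0 :: complex where z0: "z0 \<noteq> 0" "summable (\<lambda>k. of_real (X (k + n)) * z0^(k + n))"
    by blast
  define X0 where "X0 k = (if n \<le> k then X k else 0)" for k
  have shift: "(\<lambda>k. of_real (X (k + n)) * z^(k + n)) = (\<lambda>k. of_real (X0 (k + n)) * z^(k + n))"
    for z :: complex by (simp add: X0_def)
  have "summable (\<lambda>k. of_real (X0 k) * z0^k)"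
    using z0(2) unfolding shift summable_iff_shift[of "\<lambda>k. of_real (X0 k) * z0^k" n] .
  then have "(\<lambda>k. of_real (X0 k) * z^k) sums (\<Sum>k. of_real (X (k + n)) * z^(k + n))"
    if "norm z < norm z0" for z :: complex
  proof -
    have summable_z: "summable (\<lambda>k. of_real (X0 k) * z^k)"
      by (rule powser_inside[OF \<open>summable (\<lambda>k. of_real (X0 k) * z0^k)\<close> that])
    moreover have "(\<Sum>k<n. of_real (X0 k) * z^k) = 0" by (simp add: X0_def)
    ultimately have "(\<lambda>k. of_real (X0 (k + n)) * z^(k + n)) sums (\<Sum>k. of_real (X0 k) * z^k)"
      using sums_iff_shift[of "\<lambda>k. of_real (X0 k) * z^k" n] summable_sums by fastforce
    then show ?thesis
      unfolding shift using summable_sums[OF summable_z] by (simp add: sums_iff)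
  qed
  then show ?thesis
    using z0 by (intro exI[of _ "norm z0"] exI[of _ X0] exI[of _ 0]) (auto simp: X0_def)
next
  case False
  then show ?thesis
    by (intro exI[of _ 1] exI[of _ "\<lambda>_. 0"] exI[of _ "THE s. False"])
       (auto simp: suminf_not_summable)
qed

lemma SHbar_form_coeffs:
  fixes a b :: "nat \<Rightarrow> complex" and A B :: "nat \<Rightarrow> real" and \<sigma> :: complex
  assumes a0: "a 0 = 0" and b0: "b 0 = 0"
    and summable_a: "\<And>z. z \<in> U \<Longrightarrow> summable (\<lambda>k. a k * z^k)"
    and summable_b: "\<And>z. z \<in> U \<Longrightarrow> summable (\<lambda>k. b k * z^k)"
    and nonneg: "\<And>k. A k \<ge> 0 \<and> B k \<ge> 0"
    and eq: "\<And>z. z \<in> U \<Longrightarrow> ps a z + cnj (ps b z) = z - (\<Sum>k. of_real (A (k + 2)) * z ^ (k + 2))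
                     + cnj (\<sigma> * (\<Sum>k. of_real (B (k + 1)) * z ^ (k + 1)))"
  obtains A' B' :: "nat \<Rightarrow> real"
  where "\<And>k. A' k \<ge> 0 \<and> B' k \<ge> 0" "A' 0 = 0" "A' 1 = 0" "B' 0 = 0"
    "\<And>k. a k = of_real ((if k = 1 then 1 else 0) - A' k)" "\<And>k. b k = \<sigma> * of_real (B' k)"
proof -
  obtain \<rho>A A' cA where A': "\<rho>A > 0" "\<forall>k. A' k = 0 \<or> A' k = A k" "\<forall>k<2. A' k = 0"
    "\<forall>z :: complex. z \<noteq> 0 \<longrightarrow> norm z < \<rho>A \<longrightarrow>
       (\<lambda>k. of_real (A' k) * z^k) sums ((\<Sum>k. of_real (A (k + 2)) * z^(k + 2)) - cA)"
    using shifted_powser_near_0[of A 2] by blast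
  obtain \<rho>B B' cB where B': "\<rho>B > 0" "\<forall>k. B' k = 0 \<or> B' k = B k" "\<forall>k<1. B' k = 0"
    "\<forall>z :: complex. z \<noteq> 0 \<longrightarrow> norm z < \<rho>B \<longrightarrow>
       (\<lambda>k. of_real (B' k) * z^k) sums ((\<Sum>k. of_real (B (k + 1)) * z^(k + 1)) - cB)"
    using shifted_powser_near_0[of B 1] by blast
  define \<rho> where "\<rho> = min 1 (min \<rho>A \<rho>B)"
  define \<alpha> where "\<alpha> k = a k - (if k = 1 then 1 else 0) + of_real (A' k)" for k
  define \<beta> where "\<beta> k = cnj (b k) - cnj \<sigma> * of_real (B' k)" for k
  have "(\<lambda>k. \<alpha> k * z^k + \<beta> k * cnj z ^ k) sums (cnj \<sigma> * cnj cB - cA)"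
    if z: "z \<noteq> 0" "norm z < \<rho>" for z
  proof -
    have zU: "z \<in> U" using z by (simp add: U_def \<rho>_def)
    define SA where "SA = (\<Sum>k. of_real (A (k + 2)) * z^(k + 2))"
    define SB where "SB = (\<Sum>k. of_real (B (k + 1)) * z^(k + 1))"
    have sums: "(\<lambda>k. a k * z^k + cnj (b k * z^k) - (if k = 1 then z else 0) + of_real (A' k) * z^k
             - cnj \<sigma> * cnj (of_real (B' k) * z^k))
          sums (ps a z + cnj (ps b z) - z + (SA - cA) - cnj \<sigma> * cnj (SB - cB))"
      using z summable_a[OF zU] summable_b[OF zU] sums_single[of 1 "\<lambda>_. z"] unfolding SA_def SB_def
      by (intro sums_add sums_diff sums_mult A'(4)[rule_format] sums_cnj[THEN iffD2] B'(4)[rule_format])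
         (auto simp: ps_def \<rho>_def intro: summable_sums)
    have limit: "ps a z + cnj (ps b z) - z + (SA - cA) - cnj \<sigma> * cnj (SB - cB) = cnj \<sigma> * cnj cB - cA"
      using eq[OF zU] by (simp add: SA_def SB_def algebra_simps)
    have terms: "(\<lambda>k. a k * z^k + cnj (b k * z^k) - (if k = 1 then z else 0) + of_real (A' k) * z^k
             - cnj \<sigma> * cnj (of_real (B' k) * z^k)) = (\<lambda>k. \<alpha> k * z^k + \<beta> k * cnj z ^ k)"
      by (auto simp: \<alpha>_def \<beta>_def algebra_simps)
    show ?thesis using sums unfolding limit terms .
  qed
  then have \<alpha>\<beta>: "\<alpha> k = 0 \<and> \<beta> k = 0" if "k \<ge> 1" for k
    using that A'(1) B'(1) by (intro harmonic_powser_const_coeff[of \<rho>]) (auto simp: \<rho>_def)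
  show ?thesis
  proof (rule that[of A' B'])
    show "A' k \<ge> 0 \<and> B' k \<ge> 0" for k using nonneg[of k] A'(2)[rule_format, of k] B'(2)[rule_format, of k] by auto
    show "A' 0 = 0" "A' 1 = 0" "B' 0 = 0" using A'(3) B'(3) by auto
    show "a k = of_real ((if k = 1 then 1 else 0) - A' k)" for k
      using a0 A'(3)[rule_format, of 0] \<alpha>\<beta>[of k] by (cases "k = 0") (auto simp: \<alpha>_def algebra_simps)
    show "b k = \<sigma> * of_real (B' k)" for k
    proof (cases "k = 0")
      case False
      then have "cnj (b k) = cnj (\<sigma> * of_real (B' k))" using \<alpha>\<beta>[of k] by (simp add: \<beta>_def)
      then show ?thesis by (metis complex_cnj_cnj)
    qed (use b0 B'(3) in simp)
  qed
qed

lemma scaled_real_powser_at_real: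
  fixes c :: "nat \<Rightarrow> real" and \<sigma> :: complex
  assumes \<sigma>: "\<sigma> \<noteq> 0" and summable: "summable (\<lambda>k. \<sigma> * of_real (c k) * of_real r ^ k)"
  shows "summable (\<lambda>k. c k * r^k)"
    and "(\<Sum>k. \<sigma> * of_real (c k) * of_real r ^ k) = \<sigma> * of_real (\<Sum>k. c k * r^k)"
proof -
  have eq: "(\<lambda>k. \<sigma> * of_real (c k) * of_real r ^ k) = (\<lambda>k. \<sigma> * of_real (c k * r^k))"
    by (simp add: mult.assoc)
  show real: "summable (\<lambda>k. c k * r^k)"
    using summable \<sigma> unfolding eq summable_cmult_iff summable_complex_of_real by simp
  have "(\<lambda>k. of_real (c k * r^k)) sums (of_real (\<Sum>k. c k * r^k) :: complex)"
    using summable_sums[OF real] by (simp only: sums_of_real_iff)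
  then show "(\<Sum>k. \<sigma> * of_real (c k) * of_real r ^ k) = \<sigma> * of_real (\<Sum>k. c k * r^k)"
    unfolding eq by (simp add: sums_iff suminf_mult)
qed

lemma deriv_scaled_real_powser_at_real:
  fixes c :: "nat \<Rightarrow> real" and \<sigma> :: complex
  assumes \<sigma>: "\<sigma> \<noteq> 0" and summable: "\<And>z. norm z < 1 \<Longrightarrow> summable (\<lambda>k. \<sigma> * of_real (c k) * z^k)"
    and r: "0 \<le> r" "r < 1"
  shows "summable (\<lambda>k. diffs c k * r^k)"
    and "deriv (ps (\<lambda>k. \<sigma> * of_real (c k))) (of_real r) = \<sigma> * of_real (\<Sum>k. diffs c k * r^k)"
proof -
  have norm_r: "norm (of_real r :: complex) < 1" using r by simp
  have diffs_eq: "diffs (\<lambda>k. \<sigma> * of_real (c k)) k = \<sigma> * of_real (diffs c k)" for k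
    by (simp add: diffs_def)
  have "summable (\<lambda>k. diffs (\<lambda>k. \<sigma> * of_real (c k)) k * of_real r ^ k)"
    by (rule termdiff_converges[OF norm_r]) (use summable in auto)
  then have diffs_summable: "summable (\<lambda>k. \<sigma> * of_real (diffs c k) * of_real r ^ k)"
    by (simp add: diffs_eq)
  then show "summable (\<lambda>k. diffs c k * r^k)" by (rule scaled_real_powser_at_real(1)[OF \<sigma>])
  have "((\<lambda>z. \<Sum>k. \<sigma> * of_real (c k) * z^k) has_field_derivative
          (\<Sum>k. diffs (\<lambda>k. \<sigma> * of_real (c k)) k * of_real r ^ k)) (at (of_real r))"
    by (rule termdiffs_strong'[of 1]) (use summable norm_r in auto)
  then have "deriv (ps (\<lambda>k. \<sigma> * of_real (c k))) (of_real r)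
      = (\<Sum>k. \<sigma> * of_real (diffs c k) * of_real r ^ k)"
    unfolding ps_def[abs_def] diffs_eq by (rule DERIV_imp_deriv)
  then show "deriv (ps (\<lambda>k. \<sigma> * of_real (c k))) (of_real r) = \<sigma> * of_real (\<Sum>k. diffs c k * r^k)"
    using scaled_real_powser_at_real(2)[OF \<sigma> diffs_summable] by simp
qed

lemma pochhammer_mono:
  fixes x y :: real
  assumes "0 \<le> x" "x \<le> y"
  shows "pochhammer x j \<le> pochhammer y j"
  unfolding pochhammer_prod using assms by (intro prod_mono) auto

lemma infsum_nat_suminf: "f summable_on (UNIV :: nat set) \<Longrightarrow> infsum f UNIV = suminf f"
  using has_sum_imp_sums[OF has_sum_infsum] sums_unique by blast

lemma summable_on_pairs_dominated:
  fixes x :: "nat \<Rightarrow> nat \<Rightarrow> complex" and M :: "nat \<Rightarrow> nat \<Rightarrow> real"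
  assumes bound: "\<And>j k. norm (x j k) \<le> M j k" and summable_M: "\<And>j. summable (M j)"
    and summable_sum_M: "summable (\<lambda>j. \<Sum>k. M j k)"
  shows "(\<lambda>(j, k). x j k) summable_on UNIV \<times> UNIV"
proof -
  have M_nonneg: "M j k \<ge> 0" for j k using bound[of j k] norm_ge_zero order_trans by blast
  have "(\<lambda>p. norm (case p of (j, k) \<Rightarrow> M j k)) summable_on Sigma UNIV (\<lambda>_. UNIV)"
  proof (subst Infinite_Sum.abs_summable_on_Sigma_iff, intro conjI ballI)
    show "(\<lambda>k. norm (case (j, k) of (j, k) \<Rightarrow> M j k)) summable_on UNIV" for j
      using summable_M[of j] M_nonneg by (simp add: summable_on_UNIV_nonneg_real_iff)
    have "infsum (\<lambda>k. M j k) UNIV = suminf (M j)" for j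
      using infsum_nat_suminf[of "M j"] summable_M[of j] M_nonneg summable_on_UNIV_nonneg_real_iff
      by metis
    moreover have "(\<lambda>j. norm (suminf (M j))) summable_on UNIV"
      using summable_sum_M M_nonneg summable_M
      by (simp add: summable_on_UNIV_nonneg_real_iff suminf_nonneg abs_of_nonneg)
    ultimately show "(\<lambda>j. norm (infsum (\<lambda>k. norm (case (j, k) of (j, k) \<Rightarrow> M j k)) UNIV))
        summable_on UNIV"
      using M_nonneg by (simp add: abs_of_nonneg)
  qed
  then have "(\<lambda>p. norm (case p of (j, k) \<Rightarrow> x j k)) summable_on UNIV \<times> UNIV"
    by (rule Infinite_Sum.abs_summable_on_comparison_test) (use bound M_nonneg in \<open>auto simp: abs_of_nonneg\<close>)
  then show ?thesis
    by (rule abs_summable_summable)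
qed

lemma suminf_swap_dominated:
  fixes x :: "nat \<Rightarrow> nat \<Rightarrow> complex" and M :: "nat \<Rightarrow> nat \<Rightarrow> real"
  assumes bound: "\<And>j k. norm (x j k) \<le> M j k" and summable_M: "\<And>j. summable (M j)"
    and summable_sum_M: "summable (\<lambda>j. \<Sum>k. M j k)"
  shows "(\<Sum>j. \<Sum>k. x j k) = (\<Sum>k. \<Sum>j. x j k)"
proof -
  have M_nonneg: "M j k \<ge> 0" for j k using bound[of j k] norm_ge_zero order_trans by blast
  have summable_x: "(\<lambda>(j, k). x j k) summable_on UNIV \<times> UNIV"
    by (rule summable_on_pairs_dominated[OF bound summable_M summable_sum_M])
  have summable_x': "(\<lambda>(k, j). x j k) summable_on UNIV \<times> UNIV"
    using summable_on_swap[of "\<lambda>(j, k). x j k" UNIV UNIV] summable_x by (simp add: case_prod_unfold)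
  have inner_j: "infsum (\<lambda>k. x j k) UNIV = (\<Sum>k. x j k)" for j
  proof -
    have "summable (\<lambda>k. norm (x j k))"
      by (rule summable_comparison_test[OF _ summable_M[of j]]) (use bound in auto)
    then show ?thesis by (intro infsum_nat_suminf norm_summable_imp_summable_on)
  qed
  have inner_k: "infsum (\<lambda>j. x j k) UNIV = (\<Sum>j. x j k)" for k
  proof -
    have "norm (x j k) \<le> suminf (M j)" for j
      using bound[of j k] sum_le_suminf[of "M j" "{k}"] summable_M M_nonneg by force
    then have "summable (\<lambda>j. norm (x j k))"
      by (intro summable_comparison_test[OF _ summable_sum_M]) auto
    then show ?thesis by (intro infsum_nat_suminf norm_summable_imp_summable_on)
  qed
  have "(\<lambda>j. infsum (\<lambda>k. x j k) UNIV) summable_on UNIV"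
    using summable_on_Sigma_banach[of x UNIV "\<lambda>_. UNIV"] summable_x by simp
  then have "(\<Sum>j. \<Sum>k. x j k) = infsum (\<lambda>j. infsum (\<lambda>k. x j k) UNIV) UNIV"
    using infsum_nat_suminf[of "\<lambda>j. infsum (\<lambda>k. x j k) UNIV"] inner_j by simp
  also have "\<dots> = infsum (\<lambda>k. infsum (\<lambda>j. x j k) UNIV) UNIV"
    by (rule infsum_swap_banach[OF summable_x])
  also have "(\<lambda>k. infsum (\<lambda>j. x j k) UNIV) summable_on UNIV"
    using summable_on_Sigma_banach[of "\<lambda>k j. x j k" UNIV "\<lambda>_. UNIV"] summable_x' by simp
  then have "infsum (\<lambda>k. infsum (\<lambda>j. x j k) UNIV) UNIV = (\<Sum>k. \<Sum>j. x j k)"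
    using infsum_nat_suminf[of "\<lambda>k. infsum (\<lambda>j. x j k) UNIV"] inner_k by simp
  finally show ?thesis .
qed

lemma suminf_swap_nonneg_le:
  fixes x :: "nat \<Rightarrow> nat \<Rightarrow> real"
  assumes nonneg: "\<And>j k. x j k \<ge> 0" and summable_j: "\<And>j. summable (x j)"
    and summable_k: "\<And>k. summable (\<lambda>j. x j k)"
    and le: "\<And>j. suminf (x j) \<le> y j" and summable_y: "summable y"
  shows "summable (\<lambda>k. \<Sum>j. x j k)" and "(\<Sum>k. \<Sum>j. x j k) \<le> suminf y"
proof -
  have partial_le: "(\<Sum>k<K. \<Sum>j. x j k) \<le> suminf y" for K
  proof -
    have "(\<Sum>k<K. \<Sum>j. x j k) = (\<Sum>j. \<Sum>k<K. x j k)"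
      by (rule suminf_sum[symmetric]) (use summable_k in auto)
    also have "\<dots> \<le> suminf y"
    proof (rule suminf_le)
      show "(\<Sum>k<K. x j k) \<le> y j" for j
        using sum_le_suminf[of "x j" "{..<K}"] summable_j nonneg le[of j] by force
    qed (use summable_k summable_y in \<open>auto intro: summable_sum\<close>)
    finally show ?thesis .
  qed
  show summable: "summable (\<lambda>k. \<Sum>j. x j k)"
    by (rule summableI_nonneg_bounded[where x="suminf y"])
       (use nonneg summable_k partial_le in \<open>auto intro: suminf_nonneg\<close>)
  show "(\<Sum>k. \<Sum>j. x j k) \<le> suminf y" by (rule suminf_le_const[OF summable partial_le])
qed

lemma norm_mult_power_le:
  fixes z c :: "'a :: real_normed_div_algebra"
  assumes "norm z \<le> 1"
  shows "norm (c * z^k) \<le> norm c"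
  using assms by (simp add: norm_mult norm_power mult_left_le power_le_one)

lemma norm_power_diff_le:
  fixes z1 z2 :: complex
  assumes "norm z1 \<le> \<rho>" "norm z2 \<le> \<rho>" "\<rho> > 0"
  shows "norm (z1^k - z2^k) \<le> real k * \<rho>^(k - 1) * norm (z1 - z2)"
proof (cases k)
  case (Suc j)
  define w1 where "w1 = z1 / of_real \<rho>"
  define w2 where "w2 = z2 / of_real \<rho>"
  have w: "norm w1 \<le> 1" "norm w2 \<le> 1" using assms by (auto simp: w1_def w2_def norm_divide)
  have z: "z1 = of_real \<rho> * w1" "z2 = of_real \<rho> * w2" using assms by (auto simp: w1_def w2_def)
  have "norm (z1^k - z2^k) = \<rho>^k * norm (w1^k - w2^k)"
    using assms by (simp add: z power_mult_distrib norm_mult norm_power right_diff_distrib[symmetric])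
  also have "\<dots> \<le> \<rho>^k * (real k * norm (w1 - w2))"
    using norm_power_diff[OF w, of k] assms by (intro mult_left_mono) auto
  also have "norm (w1 - w2) = norm (z1 - z2) / \<rho>"
    using assms by (simp add: w1_def w2_def diff_divide_distrib[symmetric] norm_divide)
  also have "\<rho>^k * (real k * (norm (z1 - z2) / \<rho>)) = real k * \<rho>^(k - 1) * norm (z1 - z2)"
    using assms Suc by (simp add: field_simps)
  finally show ?thesis .
qed simp

lemma Re_diff_divide_add_pos:
  fixes X Y :: complex
  assumes "norm Y < norm X"
  shows "Re ((X - Y) / (X + Y)) > 0"
proof -
  have "X + Y \<noteq> 0"
    using assms by (metis add.inverse_unique norm_minus_cancel order_less_irrefl)
  moreover have "Re ((X - Y) * cnj (X + Y)) = (norm X)^2 - (norm Y)^2"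
    unfolding cmod_power2 by (simp add: algebra_simps power2_eq_square)
  moreover have "(norm X)^2 - (norm Y)^2 > 0"
    using assms by (simp add: power_strict_mono)
  ultimately show ?thesis
    by (subst complex_div_cnj) (simp add: Re_divide_of_real)
qed

lemma convex_suminf_less:
  fixes x t :: "nat \<Rightarrow> real"
  assumes less: "\<And>j. x j < M" and t: "\<And>j. t j \<ge> 0" "t sums 1" and summable: "summable (\<lambda>j. t j * x j)"
  shows "(\<Sum>j. t j * x j) < M"
proof -
  have "\<exists>i. t i > 0"
  proof (rule ccontr)
    assume "\<not> (\<exists>i. t i > 0)"
    then have "t = (\<lambda>_. 0)" using t(1) by (auto intro: antisym simp: not_less fun_eq_iff)
    then show False using sums_unique2[of "\<lambda>_. 0 :: real" 1 0] t(2) by simp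
  qed
  then obtain i where "t i > 0" by blast
  have summable_tM: "summable (\<lambda>j. t j * M)"
    using sums_summable[OF t(2)] by (rule summable_mult2)
  have "0 < (\<Sum>j. t j * M - t j * x j)"
  proof (rule suminf_pos2[OF summable_diff[OF summable_tM summable]])
    show "0 \<le> t j * M - t j * x j" for j
      using mult_left_mono[OF less_imp_le[OF less[of j]] t(1)[of j]] by simp
    show "0 < t i * M - t i * x i"
      using mult_strict_left_mono[OF less[of i] \<open>t i > 0\<close>] by simp
  qed
  also have "\<dots> = (\<Sum>j. t j * M) - (\<Sum>j. t j * x j)"
    by (rule suminf_diff[OF summable_tM summable, symmetric])
  also have "(\<Sum>j. t j * M) = M"
    using t(2) by (simp add: sums_iff suminf_mult2[symmetric])
  finally show ?thesis by simp
qed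

lemma convex_suminf_le:
  fixes x :: "nat \<Rightarrow> nat \<Rightarrow> real"
  assumes nonneg: "\<And>j k. x j k \<ge> 0" and summable: "\<And>j. summable (x j)" and le: "\<And>j. suminf (x j) \<le> M"
    and t: "\<And>j. t j \<ge> 0" "t sums 1" and summable_k: "\<And>k. summable (\<lambda>j. t j * x j k)"
  shows "summable (\<lambda>k. \<Sum>j. t j * x j k)" and "(\<Sum>k. \<Sum>j. t j * x j k) \<le> M"
proof -
  have "summable (\<lambda>k. \<Sum>j. t j * x j k) \<and> (\<Sum>k. \<Sum>j. t j * x j k) \<le> (\<Sum>j. t j * M)"
  proof -
    have "suminf (\<lambda>k. t j * x j k) \<le> t j * M" for j
      using summable le t(1) by (simp add: suminf_mult mult_left_mono)
    moreover have "summable (\<lambda>j. t j * M)" using sums_summable[OF t(2)] by (rule summable_mult2)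
    ultimately show ?thesis
      using suminf_swap_nonneg_le[of "\<lambda>j k. t j * x j k" "\<lambda>j. t j * M"] nonneg t(1) summable summable_k
      by (auto intro: summable_mult)
  qed
  moreover have "(\<Sum>j. t j * M) = M" using t(2) by (simp add: sums_iff suminf_mult2[symmetric])
  ultimately show "summable (\<lambda>k. \<Sum>j. t j * x j k)" and "(\<Sum>k. \<Sum>j. t j * x j k) \<le> M"
    by simp_all
qed

lemma convex_ps_sums:
  fixes c :: "nat \<Rightarrow> nat \<Rightarrow> complex" and d :: "nat \<Rightarrow> complex" and D :: "nat \<Rightarrow> nat \<Rightarrow> real"
  assumes t: "\<And>j. t j \<ge> 0" "summable t"
    and bound: "\<And>j k. norm (c j k) \<le> D j k" and summable_D: "\<And>j. summable (D j)"
    and sum_D: "\<And>j. suminf (D j) \<le> K"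
    and coeff: "\<And>k. (\<lambda>j. of_real (t j) * c j k) sums d k"
    and z: "norm z \<le> 1"
  shows "(\<lambda>j. of_real (t j) * ps (c j) z) sums ps d z"
proof -
  define x where "x j k = of_real (t j) * (c j k * z^k)" for j k
  have D_nonneg: "D j k \<ge> 0" for j k using bound[of j k] norm_ge_zero order_trans by blast
  have summable_c: "summable (\<lambda>k. c j k * z^k)" for j
    using z bound by (intro summable_comparison_test[OF _ summable_D[of j]])
      (auto intro: order_trans[OF norm_mult_power_le])
  have norm_ps: "norm (ps (c j) z) \<le> K" for j
  proof -
    have "norm (ps (c j) z) \<le> suminf (D j)"
      unfolding ps_def using z bound
      by (intro norm_suminf_le summable_D) (auto intro: order_trans[OF norm_mult_power_le])
    then show ?thesis using sum_D[of j] by simp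
  qed
  have summable_tK: "summable (\<lambda>j. t j * K)" using t by (intro summable_mult2)
  have "(\<Sum>j. \<Sum>k. x j k) = (\<Sum>k. \<Sum>j. x j k)"
  proof (rule suminf_swap_dominated)
    show "norm (x j k) \<le> t j * D j k" for j k
      using t(1)[of j] bound[of j k] norm_mult_power_le[OF z, of "c j k" k]
      by (simp add: x_def norm_mult mult_left_mono order_trans)
    show "summable (\<lambda>k. t j * D j k)" for j using summable_D by (intro summable_mult)
    show "summable (\<lambda>j. \<Sum>k. t j * D j k)"
      using t sum_D D_nonneg summable_D
      by (intro summable_comparison_test[OF _ summable_tK])
         (auto simp: suminf_mult abs_mult suminf_nonneg mult_left_mono intro!: exI[of _ 0])
  qed
  moreover have "(\<Sum>k. x j k) = of_real (t j) * ps (c j) z" for j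
    unfolding x_def ps_def using summable_c by (simp add: suminf_mult)
  moreover have "(\<Sum>j. x j k) = d k * z^k" for k
    using sums_mult2[OF coeff[of k], of "z^k"] by (simp add: x_def sums_iff mult.assoc)
  ultimately have "(\<Sum>j. of_real (t j) * ps (c j) z) = ps d z"
    by (simp add: ps_def)
  moreover have "summable (\<lambda>j. of_real (t j) * ps (c j) z)"
    using t norm_ps
    by (intro summable_comparison_test[OF _ summable_tK]) (auto simp: norm_mult mult_left_mono)
  ultimately show ?thesis by (simp add: sums_iff)
qed

lemma deriv_ps:
  fixes c :: "nat \<Rightarrow> complex"
  assumes summable: "\<And>w. norm w < 1 \<Longrightarrow> summable (\<lambda>k. c k * w^k)" and z: "norm z < 1"
  shows "summable (\<lambda>k. diffs c k * z^k)" and "deriv (ps c) z = (\<Sum>k. diffs c k * z^k)"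
proof -
  show "summable (\<lambda>k. diffs c k * z^k)"
    by (rule termdiff_converges[OF z]) (use summable in auto)
  have "((\<lambda>z. \<Sum>k. c k * z^k) has_field_derivative (\<Sum>k. diffs c k * z^k)) (at z)"
    by (rule termdiffs_strong'[of 1]) (use summable z in auto)
  then show "deriv (ps c) z = (\<Sum>k. diffs c k * z^k)"
    unfolding ps_def[abs_def] by (rule DERIV_imp_deriv)
qed

lemma norm_real_powser_le:
  fixes X :: "nat \<Rightarrow> real" and z :: complex
  assumes nonneg: "\<And>k. X k \<ge> 0" and summable: "summable (\<lambda>k. X k * \<rho>^k)" and z: "norm z \<le> \<rho>"
  shows "summable (\<lambda>k. of_real (X k) * z^k)" and "norm (\<Sum>k. of_real (X k) * z^k) \<le> (\<Sum>k. X k * \<rho>^k)"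
proof -
  have bound: "norm (of_real (X k) * z^k) \<le> X k * \<rho>^k" for k
    using nonneg[of k] z by (simp add: norm_mult norm_power mult_left_mono power_mono)
  show "summable (\<lambda>k. of_real (X k) * z^k)"
    by (rule summable_comparison_test[OF _ summable]) (use bound in auto)
  show "norm (\<Sum>k. of_real (X k) * z^k) \<le> (\<Sum>k. X k * \<rho>^k)"
    by (rule norm_suminf_le[OF bound summable])
qed

lemma norm_real_powser_diff_le:
  fixes X :: "nat \<Rightarrow> real" and z1 z2 :: complex
  assumes nonneg: "\<And>k. X k \<ge> 0" and summable: "summable (\<lambda>k. X k * (real k * \<rho>^(k - 1)))"
    and z: "norm z1 \<le> \<rho>" "norm z2 \<le> \<rho>" "\<rho> > 0"
  shows "summable (\<lambda>k. of_real (X k) * (z1^k - z2^k))"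
    and "norm (\<Sum>k. of_real (X k) * (z1^k - z2^k)) \<le> (\<Sum>k. X k * (real k * \<rho>^(k - 1))) * norm (z1 - z2)"
proof -
  have summable': "summable (\<lambda>k. X k * (real k * \<rho>^(k - 1)) * norm (z1 - z2))"
    using summable by (rule summable_mult2)
  have bound: "norm (of_real (X k) * (z1^k - z2^k)) \<le> X k * (real k * \<rho>^(k - 1)) * norm (z1 - z2)" for k
    using norm_power_diff_le[OF z, of k] nonneg[of k] by (simp add: norm_mult mult_left_mono mult.assoc)
  show "summable (\<lambda>k. of_real (X k) * (z1^k - z2^k))"
    by (rule summable_comparison_test[OF _ summable']) (use bound in auto)
  have "norm (\<Sum>k. of_real (X k) * (z1^k - z2^k)) \<le> (\<Sum>k. X k * (real k * \<rho>^(k - 1)) * norm (z1 - z2))"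
    by (rule norm_suminf_le[OF bound summable'])
  also have "\<dots> = (\<Sum>k. X k * (real k * \<rho>^(k - 1))) * norm (z1 - z2)"
    by (rule suminf_mult2[OF summable, symmetric])
  finally show "norm (\<Sum>k. of_real (X k) * (z1^k - z2^k)) \<le> (\<Sum>k. X k * (real k * \<rho>^(k - 1))) * norm (z1 - z2)" .
qed

text \<open>With \<open>N = z - a1 - b1\<close>, \<open>D = z - a2 + \<epsilon> b2\<close> and suitable \<open>P\<close>, \<open>Q\<close> one has
  \<open>N - \<eta> D = (1 - \<eta>) ((z - P) - Q)\<close> and \<open>D = (z - P) + Q\<close>; the hypothesis says \<open>|P| + |Q| < |z|\<close>.\<close>

lemma Re_quotient_gt:
  fixes z a1 a2 b1 b2 :: complex and eta \<epsilon> :: real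
  assumes eta: "eta < 1"
    and small: "norm (a1 + of_real (1 - 2 * eta) * a2 + b1 - of_real ((1 - 2 * eta) * \<epsilon>) * b2)
        + norm (a1 - a2 + b1 + of_real \<epsilon> * b2) < 2 * (1 - eta) * norm z"
  shows "Re ((z - a1 - b1) / (z - a2 + of_real \<epsilon> * b2)) > eta"
proof -
  define L where "L = complex_of_real (1 - eta)"
  define P2 where "P2 = a1 + of_real (1 - 2 * eta) * a2 + b1 - of_real ((1 - 2 * eta) * \<epsilon>) * b2"
  define Q2 where "Q2 = a1 - a2 + b1 + of_real \<epsilon> * b2"
  define P where "P = P2 / (2 * L)"
  define Q where "Q = Q2 / (2 * L)"
  have "2 * L = of_real (2 * (1 - eta))" by (simp add: L_def)
  then have L: "L \<noteq> 0" "norm (2 * L) = 2 * (1 - eta)"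
    using eta by (auto simp only: norm_of_real) (simp_all add: L_def)
  have "norm P + norm Q = (norm P2 + norm Q2) / (2 * (1 - eta))"
    unfolding P_def Q_def norm_divide L(2) by (simp add: add_divide_distrib)
  also have "\<dots> < norm z"
    using small eta by (simp add: divide_less_eq mult.commute P2_def Q2_def)
  finally have "norm P + norm Q < norm z" .
  then have less: "norm Q < norm (z - P)"
    using norm_triangle_ineq2[of z P] by linarith
  have "L * ((z - P) - Q) = L * z - (P2 + Q2) / 2"
    using L(1) by (simp add: P_def Q_def field_simps)
  also have "\<dots> = (z - a1 - b1) - of_real eta * (z - a2 + of_real \<epsilon> * b2)"
    by (simp add: P2_def Q2_def L_def field_simps)
  finally have N: "z - a1 - b1 = of_real eta * (z - a2 + of_real \<epsilon> * b2) + L * ((z - P) - Q)"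
    by (simp add: algebra_simps)
  have "(z - P) + Q = z - (P2 - Q2) / (2 * L)"
    by (simp add: P_def Q_def diff_divide_distrib)
  also have "P2 - Q2 = 2 * L * (a2 - of_real \<epsilon> * b2)"
    by (simp add: P2_def Q2_def L_def algebra_simps)
  finally have D: "z - a2 + of_real \<epsilon> * b2 = (z - P) + Q"
    using L(1) by simp
  have "D0": "(z - P) + Q \<noteq> 0"
    using less by (metis add.commute add_diff_cancel_left' diff_0 norm_minus_cancel order_less_irrefl)
  define w where "w = ((z - P) - Q) / ((z - P) + Q)"
  have "(z - a1 - b1) / (z - a2 + of_real \<epsilon> * b2) = of_real eta + L * w"
    unfolding N D w_def using D0 by (simp add: add_divide_distrib)
  then have "Re ((z - a1 - b1) / (z - a2 + of_real \<epsilon> * b2)) = eta + (1 - eta) * Re w"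
    by (simp add: L_def)
  moreover have "Re w > 0"
    unfolding w_def by (rule Re_diff_divide_add_pos[OF less])
  ultimately show ?thesis using eta by simp
qed

lemma norm_mixed_real_powser_le:
  fixes \<alpha> \<beta> :: "nat \<Rightarrow> real" and z :: complex
  assumes "\<And>k. \<alpha> k \<ge> 0" "\<And>k. \<beta> k \<ge> 0"
    and "summable (\<lambda>k. \<alpha> k * norm z ^ k)" "summable (\<lambda>k. \<beta> k * norm z ^ k)"
  shows "norm ((\<Sum>k. of_real (\<alpha> k) * z^k) + (\<Sum>k. of_real (\<beta> k) * cnj z ^ k))
      \<le> (\<Sum>k. (\<alpha> k + \<beta> k) * norm z ^ k)"
proof -
  have "norm ((\<Sum>k. of_real (\<alpha> k) * z^k) + (\<Sum>k. of_real (\<beta> k) * cnj z ^ k))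
      \<le> (\<Sum>k. \<alpha> k * norm z ^ k) + (\<Sum>k. \<beta> k * norm z ^ k)"
    using norm_real_powser_le(2)[of \<alpha> "norm z" z] norm_real_powser_le(2)[of \<beta> "norm z" "cnj z"] assms
    by (auto intro!: order_trans[OF norm_triangle_ineq] add_mono)
  also have "\<dots> = (\<Sum>k. (\<alpha> k + \<beta> k) * norm z ^ k)"
    using suminf_add[OF assms(3,4)] by (simp add: distrib_right)
  finally show ?thesis .
qed

lemma suminf_real_powser_lincomb:
  fixes f g :: "nat \<Rightarrow> real" and w :: complex
  assumes "summable (\<lambda>k. of_real (f k) * w^k)" "summable (\<lambda>k. of_real (g k) * w^k)"
  shows "(\<Sum>k. of_real (f k + c * g k) * w^k) = (\<Sum>k. of_real (f k) * w^k) + of_real c * (\<Sum>k. of_real (g k) * w^k)"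
proof -
  have "(\<lambda>k. of_real (f k + c * g k) * w^k) = (\<lambda>k. of_real (f k) * w^k + of_real c * (of_real (g k) * w^k))"
    by (simp add: fun_eq_iff algebra_simps)
  then show ?thesis
    using suminf_add[OF assms(1) summable_mult[OF assms(2)]] suminf_mult[OF assms(2)] by simp
qed

lemma SHbar_cong:
  assumes eq: "\<And>z. z \<in> U \<Longrightarrow> g z = f z" and f: "SHbar al be ga de p q m n eta f"
  shows "SHbar al be ga de p q m n eta g"
proof -
  have "inj_on g U = inj_on f U" by (rule inj_on_cong) (simp add: eq)
  then show ?thesis using f unfolding SHbar_def SH_def by (simp add: eq)
qed

definition h_coeff :: "(nat \<Rightarrow> real) \<Rightarrow> nat \<Rightarrow> complex" where
  "h_coeff A k = of_real ((if k = 1 then 1 else 0) - A k)"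

lemma ps_h_coeff:
  fixes z :: complex
  assumes summable: "summable A" and nonneg: "\<And>k. A k \<ge> 0" and z: "norm z \<le> 1"
  shows "summable (\<lambda>k. of_real (A k) * z^k)" and "ps (h_coeff A) z = z - (\<Sum>k. of_real (A k) * z^k)"
proof -
  show summable_Az: "summable (\<lambda>k. of_real (A k) * z^k)"
    using norm_real_powser_le(1)[of A 1 z] assms by simp
  have "(\<lambda>k. (if k = 1 then z else 0) - of_real (A k) * z^k) sums (z - (\<Sum>k. of_real (A k) * z^k))"
    using sums_single[of 1 "\<lambda>_. z"] summable_sums[OF summable_Az] by (rule sums_diff)
  moreover have "(\<lambda>k. (if k = 1 then z else 0) - of_real (A k) * z^k) = (\<lambda>k. h_coeff A k * z^k)"
    by (auto simp: h_coeff_def algebra_simps)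
  ultimately show "ps (h_coeff A) z = z - (\<Sum>k. of_real (A k) * z^k)"
    by (simp add: ps_def sums_iff)
qed

locale SH_setting =
  fixes al be ga de p q eta :: real and m n :: nat
  assumes pos: "al > 0" "be > 0" "ga > 0" "de > 0" "p > 0" "q > 0"
    and eta: "0 \<le> eta" "eta < 1" and mn: "m \<ge> 1" "m > n"
begin

abbreviation C :: "nat \<Rightarrow> nat \<Rightarrow> real" where
  "C r k \<equiv> Ccoef al be ga de p q r k"

text \<open>For \<open>f = harmonic_of A B\<close> the operators read
  \<open>Phi^m f = z - \<Sum> C m k A k z^k - cnj (\<Sum> C m k B k z^k)\<close> and
  \<open>Phi^n f = z - \<Sum> C n k A k z^k + ep cnj (\<Sum> C n k B k z^k)\<close>, since \<open>(-1)^m sg = -1\<close>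
  and \<open>(-1)^n sg = ep\<close>.\<close>

definition sg :: complex where "sg = (-1) ^ (m - 1)"
definition ep :: real where "ep = (-1) ^ (n + m - 1)"

definition g_coeff :: "(nat \<Rightarrow> real) \<Rightarrow> nat \<Rightarrow> complex" where
  "g_coeff B k = sg * of_real (B k)"

definition harmonic_of :: "(nat \<Rightarrow> real) \<Rightarrow> (nat \<Rightarrow> real) \<Rightarrow> complex \<Rightarrow> complex" where
  "harmonic_of A B z = ps (h_coeff A) z + cnj (ps (g_coeff B) z)"

definition wA :: "nat \<Rightarrow> real" where "wA k = C m k - eta * C n k"
definition wB :: "nat \<Rightarrow> real" where "wB k = C m k + eta * ep * C n k"

definition weighted :: "(nat \<Rightarrow> real) \<Rightarrow> (nat \<Rightarrow> real) \<Rightarrow> nat \<Rightarrow> real" where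
  "weighted A B k = wA k * A k + wB k * B k"

text \<open>The first bound comes from sense-preservation and yields univalence, the second from
  \<open>Re (Phi^m f / Phi^n f) > eta\<close>; the strict bound at \<open>k = 1\<close> gives \<open>B 1 < 1\<close>.\<close>

definition coeff_cond :: "(nat \<Rightarrow> real) \<Rightarrow> (nat \<Rightarrow> real) \<Rightarrow> bool" where
  "coeff_cond A B \<longleftrightarrow> (\<forall>k. A k \<ge> 0 \<and> B k \<ge> 0) \<and> A 0 = 0 \<and> A 1 = 0 \<and> B 0 = 0 \<and>
     summable (\<lambda>k. real k * (A k + B k)) \<and> (\<Sum>k. real k * (A k + B k)) \<le> 1 \<and>
     summable (weighted A B) \<and> suminf (weighted A B) \<le> 1 - eta \<and> weighted A B 1 < 1 - eta"

lemma C_le_1: "k \<le> 1 \<Longrightarrow> C r k = 1"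
  by (simp add: Ccoef_def)

lemma C_pos: "C r k > 0"
proof (cases "k \<le> 1")
  case False
  have "pochhammer (real r + 1) (k - 1) > 0" by (rule pochhammer_pos) simp
  moreover have "Gamma (ga + q * real (k - 1)) > 0" "Gamma ga > 0" "Gamma (be + al * real (k - 1)) > 0"
    "Gamma (de + p * real (k - 1)) > 0" "Gamma de > 0"
    using pos by (auto intro!: Gamma_real_pos add_pos_nonneg)
  ultimately show ?thesis using False by (simp add: Ccoef_def)
qed (simp add: C_le_1)

lemma C_mono: "r1 \<le> r2 \<Longrightarrow> C r1 k \<le> C r2 k"
proof (cases "k \<le> 1")
  case False
  assume "r1 \<le> r2"
  then have "pochhammer (real r1 + 1) (k - 1) \<le> pochhammer (real r2 + 1) (k - 1)"
    by (intro pochhammer_mono) auto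
  moreover have "Gamma (ga + q * real (k - 1)) > 0" "Gamma ga > 0" "Gamma (be + al * real (k - 1)) > 0"
    "Gamma (de + p * real (k - 1)) > 0" "Gamma de > 0"
    using pos by (auto intro!: Gamma_real_pos add_pos_nonneg)
  ultimately show ?thesis using False
    by (simp add: Ccoef_def divide_right_mono mult_right_mono)
qed (simp add: C_le_1)

lemma C_n_le_C_m: "C n k \<le> C m k"
  using C_mono mn by simp

lemma ep_cases: "ep = 1 \<or> ep = -1"
  unfolding ep_def by (cases "even (n + m - 1)") auto

lemma sg_cases: "sg = 1 \<or> sg = -1"
  unfolding sg_def by (cases "even (m - 1)") auto

lemma cnj_sg [simp]: "cnj sg = sg"
  using sg_cases by auto

lemma norm_sg [simp]: "norm sg = 1"
  using sg_cases by auto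

lemma sg_nonzero: "sg \<noteq> 0"
  using sg_cases by auto

lemma sign_m: "(-1) ^ m * sg = of_real (-1)"
proof -
  have "(-1::complex) ^ m * (-1) ^ (m - 1) = (-1) ^ (m + (m - 1))" by (simp add: power_add)
  also have "m + (m - 1) = Suc (2 * (m - 1))" using mn by simp
  finally show ?thesis unfolding sg_def by simp
qed

lemma sign_n: "(-1) ^ n * sg = of_real ep"
  unfolding sg_def ep_def using mn by (simp add: power_add[symmetric])

lemma wA_ge: "wA k \<ge> (1 - eta) * C m k"
  using C_n_le_C_m[of k] eta by (simp add: wA_def algebra_simps mult_left_mono)

lemma wB_ge: "wB k \<ge> (1 - eta) * C m k"
proof -
  have "eta * C n k \<le> eta * C m k" "0 \<le> eta * C n k"
    using C_n_le_C_m[of k] C_pos[of n k] eta by (auto simp: mult_left_mono)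
  then show ?thesis using ep_cases by (auto simp: wB_def algebra_simps)
qed

lemma wA_nonneg: "wA k \<ge> 0"
  using wA_ge[of k] C_pos[of m k] eta by (meson diff_ge_0_iff_ge less_imp_le mult_nonneg_nonneg order_trans)

lemma wB_nonneg: "wB k \<ge> 0"
  using wB_ge[of k] C_pos[of m k] eta by (meson diff_ge_0_iff_ge less_imp_le mult_nonneg_nonneg order_trans)

lemma weighted_1: "weighted A B 1 = (1 - eta) * A 1 + (1 + eta * ep) * B 1"
  by (simp add: weighted_def wA_def wB_def C_le_1)

lemma C_le_weight:
  assumes "r \<in> {m, n}"
  shows "C r k \<le> wA k / (1 - eta)" and "C r k \<le> wB k / (1 - eta)"
proof -
  have "C r k \<le> C m k" using assms C_n_le_C_m by auto
  then have "(1 - eta) * C r k \<le> (1 - eta) * C m k" using eta by (simp add: mult_left_mono)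
  then have "(1 - eta) * C r k \<le> wA k" "(1 - eta) * C r k \<le> wB k"
    using wA_ge[of k] wB_ge[of k] by linarith+
  then show "C r k \<le> wA k / (1 - eta)" "C r k \<le> wB k / (1 - eta)"
    using eta by (simp_all add: le_divide_eq mult.commute)
qed

lemma coeff_condD:
  assumes "coeff_cond A B"
  shows "\<And>k. 0 \<le> A k" "\<And>k. 0 \<le> B k" "A 0 = 0" "A 1 = 0" "B 0 = 0"
    "summable (\<lambda>k. real k * (A k + B k))" "(\<Sum>k. real k * (A k + B k)) \<le> 1"
    "summable (weighted A B)" "suminf (weighted A B) \<le> 1 - eta" "weighted A B 1 < 1 - eta"
  using assms unfolding coeff_cond_def by auto

lemma weighted_nonneg: "(\<And>k. 0 \<le> A k) \<Longrightarrow> (\<And>k. 0 \<le> B k) \<Longrightarrow> weighted A B k \<ge> 0"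
  using wA_nonneg wB_nonneg by (simp add: weighted_def)

lemma coeff_cond_B1:
  assumes "coeff_cond A B"
  shows "B 1 < 1"
proof -
  have "(1 + eta * ep) * B 1 < 1 - eta" and "B 1 \<ge> 0"
    using coeff_condD[OF assms] weighted_1[of A B] by auto
  from ep_cases show ?thesis
  proof
    assume "ep = 1"
    moreover have "B 1 \<le> (1 + eta) * B 1"
      using \<open>B 1 \<ge> 0\<close> eta by (simp add: algebra_simps)
    ultimately show ?thesis using \<open>(1 + eta * ep) * B 1 < 1 - eta\<close> eta by simp
  next
    assume "ep = -1"
    then have "(1 - eta) * B 1 < (1 - eta) * 1"
      using \<open>(1 + eta * ep) * B 1 < 1 - eta\<close> by (simp add: algebra_simps)
    then show ?thesis using eta by (simp add: mult_less_cancel_left_pos)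
  qed
qed

lemma g_coeff_real: "g_coeff B = (\<lambda>k. sg * of_real (B k))"
  by (simp add: g_coeff_def fun_eq_iff)

lemma Phi_harm_at_real:
  assumes summable_h: "summable (\<lambda>k. of_real (C s k) * h_coeff A k * of_real r ^ k)"
    and summable_g: "summable (\<lambda>k. of_real (C s k) * g_coeff B k * of_real r ^ k)"
    and \<tau>: "(-1) ^ s * sg = of_real \<tau>"
  shows "summable (\<lambda>k. C s k * ((if k = 1 then 1 else 0) - A k + \<tau> * B k) * r^k)"
    and "Phi_harm al be ga de p q s (h_coeff A) (g_coeff B) (of_real r)
       = of_real (\<Sum>k. C s k * ((if k = 1 then 1 else 0) - A k + \<tau> * B k) * r^k)"
proof -
  have h: "of_real (C s k) * h_coeff A k * of_real r ^ k
      = 1 * of_real (C s k * ((if k = 1 then 1 else 0) - A k)) * of_real r ^ k" for k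
    by (simp add: h_coeff_def)
  have g: "of_real (C s k) * g_coeff B k * of_real r ^ k = sg * of_real (C s k * B k) * of_real r ^ k"
    for k by (simp add: g_coeff_def)
  note real_h = scaled_real_powser_at_real[OF one_neq_zero summable_h[unfolded h]]
  note real_g = scaled_real_powser_at_real[OF sg_nonzero summable_g[unfolded g]]
  have "(\<lambda>k. C s k * ((if k = 1 then 1 else 0) - A k) * r^k + \<tau> * (C s k * B k * r^k))
      sums ((\<Sum>k. C s k * ((if k = 1 then 1 else 0) - A k) * r^k) + \<tau> * (\<Sum>k. C s k * B k * r^k))"
    using real_h(1) real_g(1) by (intro sums_add sums_mult summable_sums) simp_all
  then have sums: "(\<lambda>k. C s k * ((if k = 1 then 1 else 0) - A k + \<tau> * B k) * r^k)
      sums ((\<Sum>k. C s k * ((if k = 1 then 1 else 0) - A k) * r^k) + \<tau> * (\<Sum>k. C s k * B k * r^k))"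
    by (simp add: algebra_simps)
  then show "summable (\<lambda>k. C s k * ((if k = 1 then 1 else 0) - A k + \<tau> * B k) * r^k)"
    by (rule sums_summable)
  have "Phi_harm al be ga de p q s (h_coeff A) (g_coeff B) (of_real r)
      = of_real (\<Sum>k. C s k * ((if k = 1 then 1 else 0) - A k) * r^k)
        + (-1) ^ s * sg * of_real (\<Sum>k. C s k * B k * r^k)"
    unfolding Phi_harm_def Phi_ps_def h g real_h(2) real_g(2) by simp
  also have "\<dots> = of_real (\<Sum>k. C s k * ((if k = 1 then 1 else 0) - A k + \<tau> * B k) * r^k)"
    using sums by (simp add: \<tau> sums_iff)
  finally show "Phi_harm al be ga de p q s (h_coeff A) (g_coeff B) (of_real r)
      = of_real (\<Sum>k. C s k * ((if k = 1 then 1 else 0) - A k + \<tau> * B k) * r^k)" .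
qed

lemma deriv_ps_coeff_at_real:
  assumes summable_h: "\<And>z. norm z < 1 \<Longrightarrow> summable (\<lambda>k. h_coeff A k * z^k)"
    and summable_g: "\<And>z. norm z < 1 \<Longrightarrow> summable (\<lambda>k. g_coeff B k * z^k)"
    and r: "0 \<le> r" "r < 1"
  shows "summable (\<lambda>k. diffs (\<lambda>k. (if k = 1 then 1 else 0) - A k) k * r^k)"
    and "deriv (ps (h_coeff A)) (of_real r) = of_real (\<Sum>k. diffs (\<lambda>k. (if k = 1 then 1 else 0) - A k) k * r^k)"
    and "summable (\<lambda>k. diffs B k * r^k)"
    and "deriv (ps (g_coeff B)) (of_real r) = sg * of_real (\<Sum>k. diffs B k * r^k)"
proof -
  define a where "a = (\<lambda>k. (if k = 1 then 1 else (0::real)) - A k)"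
  have h_eq: "h_coeff A = (\<lambda>k. 1 * of_real (a k))"
    by (simp add: h_coeff_def a_def fun_eq_iff)
  have summable_h': "summable (\<lambda>k. 1 * of_real (a k) * z^k)" if "norm z < 1" for z :: complex
    using summable_h[OF that] by (simp add: h_eq)
  have summable_g': "summable (\<lambda>k. sg * of_real (B k) * z^k)" if "norm z < 1" for z :: complex
    using summable_g[OF that] by (simp add: g_coeff_real)
  have "summable (\<lambda>k. diffs a k * r^k)"
    and "deriv (ps (h_coeff A)) (of_real r) = of_real (\<Sum>k. diffs a k * r^k)"
    using deriv_scaled_real_powser_at_real[of 1 a r] summable_h' r by (simp_all add: h_eq)
  then show "summable (\<lambda>k. diffs (\<lambda>k. (if k = 1 then 1 else 0) - A k) k * r^k)"
    and "deriv (ps (h_coeff A)) (of_real r) = of_real (\<Sum>k. diffs (\<lambda>k. (if k = 1 then 1 else 0) - A k) k * r^k)"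
    unfolding a_def .
  show "summable (\<lambda>k. diffs B k * r^k)"
    and "deriv (ps (g_coeff B)) (of_real r) = sg * of_real (\<Sum>k. diffs B k * r^k)"
    using deriv_scaled_real_powser_at_real[OF sg_nonzero summable_g' r] by (simp_all add: g_coeff_real)
qed

lemma sense_preserving_imp_sum_bound:
  assumes nonneg: "\<And>k. A k \<ge> 0 \<and> B k \<ge> 0" and A1: "A 1 = 0"
    and summable_h: "\<And>z. norm z < 1 \<Longrightarrow> summable (\<lambda>k. h_coeff A k * z^k)"
    and summable_g: "\<And>z. norm z < 1 \<Longrightarrow> summable (\<lambda>k. g_coeff B k * z^k)"
    and sense_preserving: "\<And>r. 0 \<le> r \<Longrightarrow> r < 1 \<Longrightarrow>
       norm (deriv (ps (g_coeff B)) (of_real r)) < norm (deriv (ps (h_coeff A)) (of_real r))"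
  shows "summable (\<lambda>k. real k * (A k + B k))" and "(\<Sum>k. real k * (A k + B k)) \<le> 1"
proof -
  define a where "a = (\<lambda>k. (if k = 1 then 1 else (0::real)) - A k)"
  have h1: "summable (\<lambda>k. diffs a k * r^k)" if "0 \<le> r" "r < 1" for r
    unfolding a_def using summable_h summable_g that by (rule deriv_ps_coeff_at_real(1))
  have h2: "deriv (ps (h_coeff A)) (of_real r) = of_real (\<Sum>k. diffs a k * r^k)" if "0 \<le> r" "r < 1" for r
    unfolding a_def using summable_h summable_g that by (rule deriv_ps_coeff_at_real(2))
  have g1: "summable (\<lambda>k. diffs B k * r^k)" if "0 \<le> r" "r < 1" for r
    using summable_h summable_g that by (rule deriv_ps_coeff_at_real(3))
  have g2: "deriv (ps (g_coeff B)) (of_real r) = sg * of_real (\<Sum>k. diffs B k * r^k)" if "0 \<le> r" "r < 1" for r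
    using summable_h summable_g that by (rule deriv_ps_coeff_at_real(4))
  define h' where "h' r = (\<Sum>k. diffs a k * r^k)" for r
  define g' where "g' r = (\<Sum>k. diffs B k * r^k)" for r
  have g'_nonneg: "g' r \<ge> 0" if "0 \<le> r" "r < 1" for r
    unfolding g'_def using g1[OF that] nonneg that by (intro suminf_nonneg) (auto simp: diffs_def)
  have g'_less: "\<bar>g' r\<bar> < \<bar>h' r\<bar>" if "0 \<le> r" "r < 1" for r
    using sense_preserving[OF that] h2[OF that] g2[OF that] by (simp add: h'_def g'_def norm_mult)
  have h'_pos: "h' r > 0" if "0 \<le> r" "r < 1" for r
    unfolding h'_def
  proof (rule real_powser_pos_if_nonzero[OF h1 _ _ that])
    show "diffs a 0 > 0" using A1 by (simp add: diffs_def a_def)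
    show "(\<Sum>k. diffs a k * x^k) \<noteq> 0" if "0 \<le> x" "x < 1" for x
      using g'_less[OF that] by (auto simp: h'_def)
  qed
  have "summable (\<lambda>k. real (Suc k) * (A (Suc k) + B (Suc k)) * r^k) \<and>
      (\<Sum>k. real (Suc k) * (A (Suc k) + B (Suc k)) * r^k) < 1" if r: "0 < r" "r < 1" for r
  proof -
    have "(\<lambda>k. diffs B k * r^k + (if k = 0 then 1 else 0) - diffs a k * r^k) sums (g' r + 1 - h' r)"
      using g1[of r] h1[of r] r sums_single[of 0 "\<lambda>_. 1::real"]
      by (intro sums_add sums_diff) (auto simp: g'_def h'_def intro: summable_sums)
    moreover have "diffs B k * r^k + (if k = 0 then 1 else 0) - diffs a k * r^k
        = real (Suc k) * (A (Suc k) + B (Suc k)) * r^k" for k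
      by (simp add: diffs_def a_def algebra_simps)
    moreover have "g' r + 1 - h' r < 1"
      using g'_less[of r] h'_pos[of r] g'_nonneg[of r] r by simp
    ultimately show ?thesis by (simp add: sums_iff)
  qed
  then show "summable (\<lambda>k. real k * (A k + B k))" and "(\<Sum>k. real k * (A k + B k)) \<le> 1"
    using bounded_of_shifted_powser_less[of "\<lambda>k. real k * (A k + B k)" 1] nonneg by auto
qed

lemma Re_cond_imp_weighted_bound:
  assumes nonneg: "\<And>k. A k \<ge> 0 \<and> B k \<ge> 0" and A0: "A 0 = 0" and A1: "A 1 = 0" and B0: "B 0 = 0"
    and B1: "B 1 < 1"
    and summable: "\<And>r s. 0 \<le> r \<Longrightarrow> r < 1 \<Longrightarrow> s \<in> {m, n} \<Longrightarrow>
       summable (\<lambda>k. of_real (C s k) * h_coeff A k * of_real r ^ k) \<and>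
       summable (\<lambda>k. of_real (C s k) * g_coeff B k * of_real r ^ k)"
    and Re: "\<And>r. 0 < r \<Longrightarrow> r < 1 \<Longrightarrow>
       Re (Phi_harm al be ga de p q m (h_coeff A) (g_coeff B) (of_real r) /
           Phi_harm al be ga de p q n (h_coeff A) (g_coeff B) (of_real r)) > eta"
  shows "summable (weighted A B)" and "suminf (weighted A B) \<le> 1 - eta" and "weighted A B 1 < 1 - eta"
proof -
  define N where "N k = C m k * ((if k = 1 then 1 else 0) - A k + (-1) * B k)" for k
  define D where "D k = C n k * ((if k = 1 then 1 else 0) - A k + ep * B k)" for k
  have N: "summable (\<lambda>k. N k * r^k)"
    "Phi_harm al be ga de p q m (h_coeff A) (g_coeff B) (of_real r) = of_real (\<Sum>k. N k * r^k)"
    if "0 \<le> r" "r < 1" for r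
    using Phi_harm_at_real[of m A r B "-1"] summable[OF that] sign_m by (simp_all add: N_def)
  have D: "summable (\<lambda>k. D k * r^k)"
    "Phi_harm al be ga de p q n (h_coeff A) (g_coeff B) (of_real r) = of_real (\<Sum>k. D k * r^k)"
    if "0 \<le> r" "r < 1" for r
    using Phi_harm_at_real[of n A r B ep] summable[OF that] sign_n by (simp_all add: D_def)
  have D1: "D 1 > 0"
    using A1 B1 nonneg[of 1] ep_cases by (auto simp: D_def C_le_1)
  have E_Suc: "N (Suc k) - eta * D (Suc k) = (if k = 0 then 1 - eta else 0) - weighted A B (Suc k)" for k
    using ep_cases by (auto simp: N_def D_def weighted_def wA_def wB_def C_le_1 algebra_simps)
  have "summable (\<lambda>k. weighted A B (Suc k) * r^k) \<and> (\<Sum>k. weighted A B (Suc k) * r^k) < 1 - eta"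
    if r: "0 < r" "r < 1" for r
  proof -
    note E = real_powser_quotient_gt[of N D eta, OF N(1) D(1) _ _ D1 eta(1) _ r]
    have "(\<Sum>k. N k * x^k) / (\<Sum>k. D k * x^k) > eta" if "0 < x" "x < 1" for x
      using Re[OF that] N(2) D(2) that by simp
    then have E_summable: "summable (\<lambda>k. (N (Suc k) - eta * D (Suc k)) * r^k)"
      and E_pos: "(\<Sum>k. (N (Suc k) - eta * D (Suc k)) * r^k) > 0"
      using E A0 B0 by (simp_all add: N_def D_def)
    have "(\<lambda>k. (if k = 0 then 1 - eta else 0) - (N (Suc k) - eta * D (Suc k)) * r^k)
        sums ((1 - eta) - (\<Sum>k. (N (Suc k) - eta * D (Suc k)) * r^k))"
      using sums_single[of 0 "\<lambda>_. 1 - eta"] E_summable by (intro sums_diff summable_sums) auto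
    moreover have "(if k = 0 then 1 - eta else 0) - (N (Suc k) - eta * D (Suc k)) * r^k
        = weighted A B (Suc k) * r^k" for k
      by (simp add: E_Suc algebra_simps)
    ultimately show ?thesis
      using E_pos by (simp add: sums_iff)
  qed
  moreover have "weighted A B k \<ge> 0" for k
    using nonneg by (intro weighted_nonneg) auto
  moreover have "weighted A B 0 = 0"
    using A0 B0 by (simp add: weighted_def)
  ultimately show "summable (weighted A B)" and "suminf (weighted A B) \<le> 1 - eta"
    and "weighted A B 1 < 1 - eta"
    using bounded_of_shifted_powser_less[of "weighted A B" "1 - eta"] by auto
qed

lemma SHbar_imp_coeff_cond:
  assumes "SHbar al be ga de p q m n eta f"
  obtains A B where "coeff_cond A B" and "\<And>z. z \<in> U \<Longrightarrow> f z = harmonic_of A B z"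
proof -
  obtain A0 B0 :: "nat \<Rightarrow> real" where nonneg0: "\<forall>k. A0 k \<ge> 0 \<and> B0 k \<ge> 0"
    and form: "\<forall>z\<in>U. f z = z - (\<Sum>k. of_real (A0 (k + 2)) * z ^ (k + 2))
                     + cnj ((-1) ^ (m - 1) * (\<Sum>k. of_real (B0 (k + 1)) * z ^ (k + 1)))"
    using assms unfolding SHbar_def by blast
  obtain a b where a0: "a 0 = 0" and b0: "b 0 = 0" and b1: "cmod (b 1) < 1"
    and summable: "\<forall>z\<in>U. summable (\<lambda>k. a k * z ^ k) \<and> summable (\<lambda>k. b k * z ^ k) \<and>
        (\<forall>r\<in>{m, n}. summable (\<lambda>k. of_real (C r k) * a k * z ^ k) \<and>
                     summable (\<lambda>k. of_real (C r k) * b k * z ^ k))"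
    and f_eq: "\<forall>z\<in>U. f z = ps a z + cnj (ps b z)"
    and sense_preserving: "\<forall>z\<in>U. cmod (deriv (ps b) z) < cmod (deriv (ps a) z)"
    and Re: "\<forall>z\<in>U - {0}. Re (Phi_harm al be ga de p q m a b z / Phi_harm al be ga de p q n a b z) > eta"
    using assms unfolding SHbar_def SH_def by blast
  obtain A B where nonneg: "\<And>k. A k \<ge> 0 \<and> B k \<ge> 0" and A01: "A 0 = 0" "A 1 = 0" and B0: "B 0 = 0"
    and a: "\<And>k. a k = of_real ((if k = 1 then 1 else 0) - A k)" and b: "\<And>k. b k = sg * of_real (B k)"
    using SHbar_form_coeffs[of a b A0 B0 sg] a0 b0 summable nonneg0 f_eq form
    by (auto simp: sg_def)
  have h: "a = h_coeff A" and g: "b = g_coeff B"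
    using a b by (auto simp: h_coeff_def g_coeff_def)
  have real_U: "of_real r \<in> U" if "0 \<le> r" "r < 1" for r
    using that by (simp add: U_def)
  have "summable (\<lambda>k. real k * (A k + B k))" and "(\<Sum>k. real k * (A k + B k)) \<le> 1"
    using sense_preserving_imp_sum_bound[of A B, OF nonneg A01(2)] summable sense_preserving real_U
    unfolding h g by (auto simp: U_def)
  moreover have "B 1 < 1"
    using b1 by (simp add: b norm_mult)
  then have "summable (weighted A B)" and "suminf (weighted A B) \<le> 1 - eta" and "weighted A B 1 < 1 - eta"
    using Re_cond_imp_weighted_bound[of A B, OF nonneg A01 B0] summable Re real_U
    unfolding h g by auto
  ultimately have "coeff_cond A B"
    using nonneg A01 B0 by (simp add: coeff_cond_def)
  moreover have "f z = harmonic_of A B z" if "z \<in> U" for z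
    using f_eq that by (simp add: harmonic_of_def h g)
  ultimately show thesis by (rule that)
qed

lemma coeff_cond_bounds:
  assumes "coeff_cond A B"
  shows "A k \<le> 1" "B k \<le> 1" "summable A" "summable B" "suminf A \<le> 1" "suminf B \<le> 1"
proof -
  note cond = coeff_condD[OF assms]
  have le: "A k \<le> real k * (A k + B k) \<and> B k \<le> real k * (A k + B k)" for k
  proof (cases k)
    case (Suc j)
    then have "A k + B k \<le> real k * (A k + B k)"
      using cond(1,2)[of k] by (simp add: mult_le_cancel_right1)
    then show ?thesis using cond(1,2)[of k] by linarith
  qed (use cond in simp)
  have le1: "real k * (A k + B k) \<le> 1" for k
    using sum_le_suminf[of "\<lambda>k. real k * (A k + B k)" "{k}"] cond(1,2,6,7) by force
  show "A k \<le> 1" "B k \<le> 1" using le[of k] le1[of k] by linarith+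
  show "summable A" "summable B"
    using le cond by (auto intro: summable_comparison_test[OF _ cond(6)])
  show "suminf A \<le> 1" "suminf B \<le> 1"
    using suminf_le[OF _ \<open>summable A\<close> cond(6)] suminf_le[OF _ \<open>summable B\<close> cond(6)] le cond(7)
    by force+
qed

lemma coeff_cond_convex_summable:
  assumes cond: "\<And>j. coeff_cond (A j) (B j)" and t: "\<And>j. t j \<ge> 0" "summable t"
  shows "summable (\<lambda>j. t j * A j k)" and "summable (\<lambda>j. t j * B j k)"
  using t coeff_condD[OF cond] coeff_cond_bounds(1,2)[OF cond]
  by (auto intro!: summable_comparison_test[OF _ t(2)] exI[of _ 0] simp: abs_mult mult_left_le)

lemma coeff_cond_convex:
  assumes cond: "\<And>j. coeff_cond (A j) (B j)" and t: "\<And>j. t j \<ge> 0" "t sums 1"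
  shows "coeff_cond (\<lambda>k. \<Sum>j. t j * A j k) (\<lambda>k. \<Sum>j. t j * B j k)"
proof -
  define Ac where "Ac k = (\<Sum>j. t j * A j k)" for k
  define Bc where "Bc k = (\<Sum>j. t j * B j k)" for k
  note c = coeff_condD[OF cond]
  note summable_A = coeff_cond_convex_summable(1)[OF cond t(1) sums_summable[OF t(2)]]
    and summable_B = coeff_cond_convex_summable(2)[OF cond t(1) sums_summable[OF t(2)]]
  have lin: "(\<Sum>j. t j * (a * A j k + b * B j k)) = a * Ac k + b * Bc k" for a b k
  proof -
    have "(\<lambda>j. t j * (a * A j k + b * B j k)) = (\<lambda>j. a * (t j * A j k) + b * (t j * B j k))"
      by (simp add: algebra_simps)
    then show ?thesis
      using suminf_add[OF summable_mult[OF summable_A[where k=k], of a] summable_mult[OF summable_B[where k=k], of b]]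
        suminf_mult[OF summable_A[where k=k], of a] suminf_mult[OF summable_B[where k=k], of b]
      by (simp add: Ac_def Bc_def)
  qed
  have summable_lin: "summable (\<lambda>j. t j * (a * A j k + b * B j k))" for a b k
    using summable_mult[OF summable_A, of a] summable_mult[OF summable_B, of b]
    by (simp add: algebra_simps summable_add)
  have "summable (\<lambda>j. t j * (real k * (A j k + B j k)))" for k
    using summable_lin[of "real k" k "real k"] by (simp add: distrib_left)
  then have "summable (\<lambda>k. \<Sum>j. t j * (real k * (A j k + B j k)))"
    and "(\<Sum>k. \<Sum>j. t j * (real k * (A j k + B j k))) \<le> 1"
    using convex_suminf_le[of "\<lambda>j k. real k * (A j k + B j k)" 1 t] c t by auto
  moreover have "(\<Sum>j. t j * (real k * (A j k + B j k))) = real k * (Ac k + Bc k)" for k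
    using lin[of "real k" k "real k"] by (simp add: algebra_simps)
  moreover have summable_weighted: "summable (\<lambda>j. t j * weighted (A j) (B j) k)" for k
    using summable_lin[of "wA k" k "wB k"] by (simp add: weighted_def)
  then have "summable (\<lambda>k. \<Sum>j. t j * weighted (A j) (B j) k)"
    and "(\<Sum>k. \<Sum>j. t j * weighted (A j) (B j) k) \<le> 1 - eta"
    using convex_suminf_le[of "\<lambda>j k. weighted (A j) (B j) k" "1 - eta" t] c t weighted_nonneg by auto
  moreover have weighted_eq: "(\<Sum>j. t j * weighted (A j) (B j) k) = weighted Ac Bc k" for k
    using lin[of "wA k" k "wB k"] by (simp add: weighted_def)
  moreover have "weighted Ac Bc 1 < 1 - eta"
    using convex_suminf_less[of "\<lambda>j. weighted (A j) (B j) 1", OF c(10) t summable_weighted]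
    unfolding weighted_eq .
  moreover have "Ac k \<ge> 0" "Bc k \<ge> 0" for k
    unfolding Ac_def Bc_def using c t summable_A summable_B by (auto intro!: suminf_nonneg)
  moreover have "Ac 0 = 0" "Ac 1 = 0" "Bc 0 = 0" using c by (simp_all add: Ac_def Bc_def)
  ultimately show ?thesis
    unfolding Ac_def[symmetric] Bc_def[symmetric] coeff_cond_def by simp
qed

lemma ps_h_coeff_convex:
  assumes cond: "\<And>j. coeff_cond (A j) (B j)" and t: "\<And>j. t j \<ge> 0" "t sums 1" and z: "z \<in> U"
  shows "(\<lambda>j. of_real (t j) * ps (h_coeff (A j)) z) sums ps (h_coeff (\<lambda>k. \<Sum>j. t j * A j k)) z"
proof (rule convex_ps_sums[OF t(1) sums_summable[OF t(2)]])
  note c = coeff_condD[OF cond] and bounds = coeff_cond_bounds[OF cond]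
  show "norm (h_coeff (A j) k) \<le> (if k = 1 then 1 else 0) + A j k" for j k
    using c(1,4)[of j] by (auto simp: h_coeff_def)
  show "summable (\<lambda>k. (if k = 1 then 1 else 0) + A j k)" for j
    by (rule summable_add[OF summable_finite[of "{1}"] bounds(3)]) auto
  show "(\<Sum>k. (if k = 1 then 1 else 0) + A j k) \<le> 2" for j
  proof -
    have "(\<lambda>k. (if k = 1 then 1 else 0) + A j k) sums (1 + suminf (A j))"
      using sums_single[of 1 "\<lambda>_. 1 :: real"] summable_sums[OF bounds(3)] by (rule sums_add)
    then show ?thesis using bounds(5)[of j] by (simp add: sums_iff)
  qed
  show "(\<lambda>j. of_real (t j) * h_coeff (A j) k) sums h_coeff (\<lambda>k. \<Sum>j. t j * A j k) k" for k
  proof -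
    have "(\<lambda>j. t j * (if k = 1 then 1 else 0) - t j * A j k)
        sums ((if k = 1 then 1 else 0) - (\<Sum>j. t j * A j k))"
      using sums_mult2[OF t(2)] summable_sums[OF coeff_cond_convex_summable(1)[OF cond t(1) sums_summable[OF t(2)]]]
      by (intro sums_diff) auto
    then have "(\<lambda>j. of_real (t j * ((if k = 1 then 1 else 0) - A j k)) :: complex)
        sums of_real ((if k = 1 then 1 else 0) - (\<Sum>j. t j * A j k))"
      unfolding sums_of_real_iff by (simp only: right_diff_distrib)
    then show ?thesis by (simp only: h_coeff_def of_real_mult)
  qed
  show "norm z \<le> 1" using z by (simp add: U_def)
qed

lemma ps_g_coeff_convex:
  assumes cond: "\<And>j. coeff_cond (A j) (B j)" and t: "\<And>j. t j \<ge> 0" "t sums 1" and z: "z \<in> U"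
  shows "(\<lambda>j. of_real (t j) * ps (g_coeff (B j)) z) sums ps (g_coeff (\<lambda>k. \<Sum>j. t j * B j k)) z"
proof (rule convex_ps_sums[OF t(1) sums_summable[OF t(2)] _ coeff_cond_bounds(4,6)[OF cond]])
  show "norm (g_coeff (B j) k) \<le> B j k" for j k
    using coeff_condD(2)[OF cond, of j k] by (simp add: g_coeff_def norm_mult)
  show "(\<lambda>j. of_real (t j) * g_coeff (B j) k) sums g_coeff (\<lambda>k. \<Sum>j. t j * B j k) k" for k
  proof -
    have "(\<lambda>j. of_real (t j * B j k) :: complex) sums of_real (\<Sum>j. t j * B j k)"
      using summable_sums[OF coeff_cond_convex_summable(2)[OF cond t(1) sums_summable[OF t(2)]]]
      by (simp only: sums_of_real_iff)
    then have "(\<lambda>j. sg * of_real (t j * B j k)) sums (sg * of_real (\<Sum>j. t j * B j k))"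
      by (rule sums_mult)
    then show ?thesis by (simp add: g_coeff_def algebra_simps)
  qed
  show "norm z \<le> 1" using z by (simp add: U_def)
qed

lemma harmonic_of_convex:
  assumes cond: "\<And>j. coeff_cond (A j) (B j)" and t: "\<And>j. t j \<ge> 0" "t sums 1" and z: "z \<in> U"
  shows "(\<lambda>j. of_real (t j) * harmonic_of (A j) (B j) z)
           sums harmonic_of (\<lambda>k. \<Sum>j. t j * A j k) (\<lambda>k. \<Sum>j. t j * B j k) z"
proof -
  have "(\<lambda>j. cnj (of_real (t j) * ps (g_coeff (B j)) z))
      sums cnj (ps (g_coeff (\<lambda>k. \<Sum>j. t j * B j k)) z)"
    using ps_g_coeff_convex[OF cond t z] by (simp only: sums_cnj)
  from sums_add[OF ps_h_coeff_convex[OF cond t z] this] show ?thesis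
    by (simp add: harmonic_of_def distrib_left)
qed

lemma ps_g_coeff:
  fixes z :: complex
  assumes summable: "summable B" and nonneg: "\<And>k. B k \<ge> 0" and z: "norm z \<le> 1"
  shows "summable (\<lambda>k. of_real (B k) * z^k)" and "ps (g_coeff B) z = sg * (\<Sum>k. of_real (B k) * z^k)"
proof -
  show summable_Bz: "summable (\<lambda>k. of_real (B k) * z^k)"
    using norm_real_powser_le(1)[of B 1 z] assms by simp
  then show "ps (g_coeff B) z = sg * (\<Sum>k. of_real (B k) * z^k)"
    by (simp add: ps_def g_coeff_def suminf_mult mult.assoc)
qed

lemma coeff_cond_shifted_sum_less:
  assumes cond: "coeff_cond A B" and \<rho>: "0 \<le> \<rho>" "\<rho> < 1"
  shows "summable (\<lambda>k. real (Suc k) * (A (Suc k) + B (Suc k)) * \<rho>^k)"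
    and "(\<Sum>k. real (Suc k) * (A (Suc k) + B (Suc k)) * \<rho>^k) < 1"
  using shifted_powser_less[of "\<lambda>k. real k * (A k + B k)" 1 \<rho>] coeff_condD[OF cond]
    coeff_cond_B1[OF cond] \<rho> by auto

lemma coeff_cond_weighted_powser_less:
  assumes cond: "coeff_cond A B" and \<rho>: "0 < \<rho>" "\<rho> < 1"
  shows "summable (\<lambda>k. weighted A B k * \<rho>^k)" and "(\<Sum>k. weighted A B k * \<rho>^k) < (1 - eta) * \<rho>"
proof -
  note c = coeff_condD[OF cond]
  have "norm (weighted A B k * \<rho>^k) \<le> weighted A B k" for k
    using weighted_nonneg[of A B k] c(1,2) \<rho> by (simp add: mult_left_le power_le_one)
  then show summable: "summable (\<lambda>k. weighted A B k * \<rho>^k)"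
    by (rule summable_comparison_test'[OF c(8)])
  have "(\<Sum>k. weighted A B k * \<rho>^k) = (\<Sum>k. weighted A B (Suc k) * \<rho>^k) * \<rho>"
    using powser_split_head(1)[OF summable] c(3,5) by (simp add: weighted_def)
  also have "\<dots> < (1 - eta) * \<rho>"
    using shifted_powser_less(2)[of "weighted A B" "1 - eta" \<rho>] c weighted_nonneg \<rho>
    by (simp add: weighted_def)
  finally show "(\<Sum>k. weighted A B k * \<rho>^k) < (1 - eta) * \<rho>" .
qed

lemma coeff_cond_C_bounds:
  assumes cond: "coeff_cond A B" and r: "r \<in> {m, n}"
  shows "C r k * A k \<le> weighted A B k / (1 - eta)" and "C r k * B k \<le> weighted A B k / (1 - eta)"
proof -
  note c = coeff_condD[OF cond]
  have "C r k * A k \<le> wA k / (1 - eta) * A k" "C r k * B k \<le> wB k / (1 - eta) * B k"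
    by (intro mult_right_mono C_le_weight[OF r] c(1,2))+
  moreover have "wA k * A k / (1 - eta) \<ge> 0" "wB k * B k / (1 - eta) \<ge> 0"
    using wA_nonneg[of k] wB_nonneg[of k] c(1,2)[of k] eta by simp_all
  ultimately show "C r k * A k \<le> weighted A B k / (1 - eta)" "C r k * B k \<le> weighted A B k / (1 - eta)"
    by (simp_all add: weighted_def add_divide_distrib)
qed

lemma coeff_cond_summable:
  assumes cond: "coeff_cond A B" and z: "z \<in> U"
  shows "summable (\<lambda>k. h_coeff A k * z^k)" and "summable (\<lambda>k. g_coeff B k * z^k)"
    and "r \<in> {m, n} \<Longrightarrow> summable (\<lambda>k. of_real (C r k) * h_coeff A k * z^k)"
    and "r \<in> {m, n} \<Longrightarrow> summable (\<lambda>k. of_real (C r k) * g_coeff B k * z^k)"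
proof -
  note c = coeff_condD[OF cond]
  have norm_z: "norm z \<le> 1" using z by (simp add: U_def)
  have bound_h: "norm (h_coeff A k) \<le> (if k = 1 then 1 else 0) + A k" for k
    using c(1)[of k] c(4) by (auto simp: h_coeff_def)
  have norm_g: "norm (g_coeff B k) = B k" for k
    using c(2)[of k] by (simp add: g_coeff_def norm_mult)
  have summable_1: "summable (\<lambda>k. if k = 1 then 1 else (0::real))"
    by (rule summable_finite[of "{1}"]) auto
  have "norm (h_coeff A k * z^k) \<le> (if k = 1 then 1 else 0) + A k" for k
    using norm_mult_power_le[OF norm_z, of "h_coeff A k" k] bound_h[of k] by linarith
  then show "summable (\<lambda>k. h_coeff A k * z^k)"
    by (rule summable_comparison_test'[OF summable_add[OF summable_1 coeff_cond_bounds(3)[OF cond]]])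
  have "norm (g_coeff B k * z^k) \<le> B k" for k
    using norm_mult_power_le[OF norm_z, of "g_coeff B k" k] norm_g[of k] by linarith
  then show "summable (\<lambda>k. g_coeff B k * z^k)"
    by (rule summable_comparison_test'[OF coeff_cond_bounds(4)[OF cond]])
  assume r: "r \<in> {m, n}"
  note CA = coeff_cond_C_bounds(1)[OF cond r] and CB = coeff_cond_C_bounds(2)[OF cond r]
  have "norm (of_real (C r k) * h_coeff A k) \<le> (if k = 1 then 1 else 0) + weighted A B k / (1 - eta)" for k
  proof (cases "k = 1")
    case True
    then show ?thesis
      using c(4) weighted_nonneg[of A B 1] c(1,2) eta by (simp add: C_le_1 h_coeff_def)
  next
    case False
    then show ?thesis
      using CA[of k] c(1)[of k] C_pos[of r k] by (simp add: h_coeff_def norm_mult abs_mult)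
  qed
  then have "norm (of_real (C r k) * h_coeff A k * z^k) \<le> (if k = 1 then 1 else 0) + weighted A B k / (1 - eta)"
    for k using norm_mult_power_le[OF norm_z, of "of_real (C r k) * h_coeff A k" k] order_trans by blast
  then show "summable (\<lambda>k. of_real (C r k) * h_coeff A k * z^k)"
    by (rule summable_comparison_test'[OF summable_add[OF summable_1 summable_divide[OF c(8)]]])
  have "norm (of_real (C r k) * g_coeff B k) \<le> weighted A B k / (1 - eta)" for k
    using CB[of k] C_pos[of r k] norm_g[of k] by (simp add: norm_mult)
  then have "norm (of_real (C r k) * g_coeff B k * z^k) \<le> weighted A B k / (1 - eta)" for k
    using norm_mult_power_le[OF norm_z, of "of_real (C r k) * g_coeff B k" k] order_trans by blast
  then show "summable (\<lambda>k. of_real (C r k) * g_coeff B k * z^k)"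
    by (rule summable_comparison_test'[OF summable_divide[OF c(8)]])
qed

lemma coeff_cond_power_diff_small:
  assumes cond: "coeff_cond A B" and z: "z1 \<in> U" "z2 \<in> U" "z1 \<noteq> z2"
  shows "norm (\<Sum>k. of_real (A k) * (z1^k - z2^k)) + norm (\<Sum>k. of_real (B k) * (z1^k - z2^k))
      < norm (z1 - z2)"
proof -
  note c = coeff_condD[OF cond]
  define \<rho> where "\<rho> = max (norm z1) (norm z2)"
  have \<rho>: "0 < \<rho>" "\<rho> < 1" "norm z1 \<le> \<rho>" "norm z2 \<le> \<rho>"
    using z by (auto simp: \<rho>_def U_def max_def)
  define v where "v k = real k * (A k + B k) * \<rho>^(k - 1)" for k
  have summable_v: "summable v" and sum_v: "suminf v < 1"
  proof -
    have "summable (\<lambda>k. v (Suc k))" and "(\<Sum>k. v (Suc k)) < 1"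
      using coeff_cond_shifted_sum_less[OF cond, of \<rho>] \<rho> by (simp_all add: v_def)
    moreover have "v 0 = 0" by (simp add: v_def)
    ultimately show "summable v" "suminf v < 1"
      by (simp_all add: summable_Suc_iff suminf_split_head)
  qed
  have "0 \<le> A k * (real k * \<rho>^(k - 1))" "0 \<le> B k * (real k * \<rho>^(k - 1))"
    "A k * (real k * \<rho>^(k - 1)) \<le> v k" "B k * (real k * \<rho>^(k - 1)) \<le> v k" for k
    using c(1,2)[of k] \<rho>(1) by (simp_all add: v_def algebra_simps mult_right_mono)
  then have summable_A: "summable (\<lambda>k. A k * (real k * \<rho>^(k - 1)))"
    and summable_B: "summable (\<lambda>k. B k * (real k * \<rho>^(k - 1)))"
    by (auto intro: summable_comparison_test'[OF summable_v])
  have "norm (\<Sum>k. of_real (A k) * (z1^k - z2^k)) + norm (\<Sum>k. of_real (B k) * (z1^k - z2^k))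
      \<le> (\<Sum>k. A k * (real k * \<rho>^(k - 1))) * norm (z1 - z2) + (\<Sum>k. B k * (real k * \<rho>^(k - 1))) * norm (z1 - z2)"
    using norm_real_powser_diff_le(2)[OF _ summable_A \<rho>(3,4,1)] norm_real_powser_diff_le(2)[OF _ summable_B \<rho>(3,4,1)] c(1,2)
    by (intro add_mono) auto
  also have "\<dots> = suminf v * norm (z1 - z2)"
  proof -
    have "v = (\<lambda>k. A k * (real k * \<rho>^(k - 1)) + B k * (real k * \<rho>^(k - 1)))"
      by (simp add: v_def fun_eq_iff algebra_simps)
    then have "suminf v = (\<Sum>k. A k * (real k * \<rho>^(k - 1))) + (\<Sum>k. B k * (real k * \<rho>^(k - 1)))"
      using suminf_add[OF summable_A summable_B] by simp
    then show ?thesis by (simp add: distrib_right)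
  qed
  also have "\<dots> < norm (z1 - z2)"
    using sum_v z(3) by simp
  finally show ?thesis .
qed

lemma harmonic_of_diff:
  assumes cond: "coeff_cond A B" and z: "z1 \<in> U" "z2 \<in> U"
  shows "harmonic_of A B z1 - harmonic_of A B z2
      = (z1 - z2) - (\<Sum>k. of_real (A k) * (z1^k - z2^k)) + cnj (sg * (\<Sum>k. of_real (B k) * (z1^k - z2^k)))"
proof -
  note c = coeff_condD[OF cond] and bounds = coeff_cond_bounds[OF cond]
  have norm_z: "norm z1 \<le> 1" "norm z2 \<le> 1" using z by (auto simp: U_def)
  note h1 = ps_h_coeff[OF bounds(3) c(1) norm_z(1)] and h2 = ps_h_coeff[OF bounds(3) c(1) norm_z(2)]
  note g1 = ps_g_coeff[OF bounds(4) c(2) norm_z(1)] and g2 = ps_g_coeff[OF bounds(4) c(2) norm_z(2)]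
  have "ps (h_coeff A) z1 - ps (h_coeff A) z2 = (z1 - z2) - (\<Sum>k. of_real (A k) * (z1^k - z2^k))"
    unfolding right_diff_distrib h1(2) h2(2) suminf_diff[OF h1(1) h2(1), symmetric] by simp
  moreover have "ps (g_coeff B) z1 - ps (g_coeff B) z2 = sg * (\<Sum>k. of_real (B k) * (z1^k - z2^k))"
    unfolding right_diff_distrib g1(2) g2(2) suminf_diff[OF g1(1) g2(1), symmetric] by simp
  moreover have "harmonic_of A B z1 - harmonic_of A B z2
      = (ps (h_coeff A) z1 - ps (h_coeff A) z2) + cnj (ps (g_coeff B) z1 - ps (g_coeff B) z2)"
    by (simp add: harmonic_of_def)
  ultimately show ?thesis by simp
qed

lemma coeff_cond_inj_on:
  assumes cond: "coeff_cond A B"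
  shows "inj_on (harmonic_of A B) U"
proof (rule inj_onI, rule ccontr)
  fix z1 z2 assume z: "z1 \<in> U" "z2 \<in> U" and eq: "harmonic_of A B z1 = harmonic_of A B z2"
    and ne: "z1 \<noteq> z2"
  define SA where "SA = (\<Sum>k. of_real (A k) * (z1^k - z2^k))"
  define SB where "SB = (\<Sum>k. of_real (B k) * (z1^k - z2^k))"
  have "z1 - z2 = SA - cnj (sg * SB)"
    using harmonic_of_diff[OF cond z] eq by (simp add: SA_def SB_def algebra_simps)
  then have "norm (z1 - z2) \<le> norm SA + norm SB"
    using norm_triangle_ineq4[of SA "cnj (sg * SB)"] by (simp add: norm_mult)
  then show False
    using coeff_cond_power_diff_small[OF cond z ne] by (simp add: SA_def SB_def)
qed

lemma coeff_cond_sense_preserving: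
  assumes cond: "coeff_cond A B" and z: "z \<in> U"
  shows "norm (deriv (ps (g_coeff B)) z) < norm (deriv (ps (h_coeff A)) z)"
proof -
  note c = coeff_condD[OF cond]
  have norm_z: "norm z < 1" using z by (simp add: U_def)
  define A' where "A' k = real (Suc k) * A (Suc k)" for k
  define B' where "B' k = real (Suc k) * B (Suc k)" for k
  have "0 \<le> A' k * norm z ^ k" "0 \<le> B' k * norm z ^ k"
    "A' k * norm z ^ k \<le> real (Suc k) * (A (Suc k) + B (Suc k)) * norm z ^ k"
    "B' k * norm z ^ k \<le> real (Suc k) * (A (Suc k) + B (Suc k)) * norm z ^ k" for k
    using c(1,2)[of "Suc k"] by (simp_all add: A'_def B'_def algebra_simps mult_right_mono)
  then have summable_A': "summable (\<lambda>k. A' k * norm z ^ k)" and summable_B': "summable (\<lambda>k. B' k * norm z ^ k)"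
    using coeff_cond_shifted_sum_less(1)[OF cond, of "norm z"] norm_z
    by (auto intro: summable_comparison_test')
  define XA where "XA = (\<Sum>k. of_real (A' k) * z^k)"
  define XB where "XB = (\<Sum>k. of_real (B' k) * z^k)"
  note A'z = norm_real_powser_le[of A' "norm z" z, OF _ summable_A' order_refl]
  note B'z = norm_real_powser_le[of B' "norm z" z, OF _ summable_B' order_refl]
  have "norm XA + norm XB \<le> (\<Sum>k. A' k * norm z ^ k) + (\<Sum>k. B' k * norm z ^ k)"
    using A'z(2) B'z(2) c(1,2) by (auto simp: XA_def XB_def A'_def B'_def intro: add_mono)
  also have "\<dots> = (\<Sum>k. real (Suc k) * (A (Suc k) + B (Suc k)) * norm z ^ k)"
    using suminf_add[OF summable_A' summable_B'] by (simp add: A'_def B'_def algebra_simps)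
  also have "\<dots> < 1"
    using coeff_cond_shifted_sum_less(2)[OF cond, of "norm z"] norm_z by simp
  finally have small: "norm XA + norm XB < 1" .
  have summable_h: "\<And>w. norm w < 1 \<Longrightarrow> summable (\<lambda>k. h_coeff A k * w^k)"
    and summable_g: "\<And>w. norm w < 1 \<Longrightarrow> summable (\<lambda>k. g_coeff B k * w^k)"
    using coeff_cond_summable(1,2)[OF cond] by (auto simp: U_def)
  have "(\<lambda>k. (if k = 0 then 1 else 0) - of_real (A' k) * z^k) sums (1 - XA)"
    unfolding XA_def using sums_single[of 0 "\<lambda>_. 1::complex"] A'z(1) c(1)
    by (intro sums_diff summable_sums) (auto simp: A'_def)
  moreover have "(\<lambda>k. (if k = 0 then 1 else 0) - of_real (A' k) * z^k) = (\<lambda>k. diffs (h_coeff A) k * z^k)"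
    using c(4) by (auto simp: diffs_def h_coeff_def A'_def algebra_simps)
  ultimately have deriv_h: "deriv (ps (h_coeff A)) z = 1 - XA"
    using deriv_ps[OF summable_h norm_z] by (simp add: sums_iff)
  moreover have "(\<lambda>k. sg * (of_real (B' k) * z^k)) sums (sg * XB)"
    unfolding XB_def using B'z(1) c(2) by (intro sums_mult summable_sums) (auto simp: B'_def)
  moreover have "(\<lambda>k. sg * (of_real (B' k) * z^k)) = (\<lambda>k. diffs (g_coeff B) k * z^k)"
    by (simp add: fun_eq_iff diffs_def g_coeff_def B'_def)
  ultimately have "deriv (ps (g_coeff B)) z = sg * XB"
    using deriv_ps[OF summable_g norm_z] by (simp add: sums_iff)
  then show ?thesis
    using deriv_h small norm_triangle_ineq2[of 1 XA] by (simp add: norm_mult)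
qed

lemma coeff_cond_SHbar_form:
  assumes cond: "coeff_cond A B" and z: "z \<in> U"
  shows "harmonic_of A B z = z - (\<Sum>k. of_real (A (k + 2)) * z ^ (k + 2))
           + cnj ((-1) ^ (m - 1) * (\<Sum>k. of_real (B (k + 1)) * z ^ (k + 1)))"
proof -
  note c = coeff_condD[OF cond] and bounds = coeff_cond_bounds[OF cond]
  have norm_z: "norm z \<le> 1" using z by (simp add: U_def)
  note h = ps_h_coeff[OF bounds(3) c(1) norm_z] and g = ps_g_coeff[OF bounds(4) c(2) norm_z]
  have "(\<Sum>k. of_real (A (k + 2)) * z ^ (k + 2)) = (\<Sum>k. of_real (A k) * z^k)"
    using suminf_split_initial_segment[OF h(1), of 2] c(3,4) by (simp add: numeral_2_eq_2)
  moreover have "(\<Sum>k. of_real (B (k + 1)) * z ^ (k + 1)) = (\<Sum>k. of_real (B k) * z^k)"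
    using suminf_split_initial_segment[OF g(1), of 1] c(5) by simp
  ultimately show ?thesis
    by (simp add: harmonic_of_def h(2) g(2) sg_def)
qed

lemma C_plus_scaled_nonneg: "\<bar>c\<bar> \<le> 1 \<Longrightarrow> C m k + c * C n k \<ge> 0"
  using C_n_le_C_m[of k] C_pos[of n k] abs_le_iff[of c 1]
  by (smt (verit, best) mult_left_le_one_le mult_minus_left mult_nonneg_nonneg)

lemma coeff_cond_C_summable:
  assumes cond: "coeff_cond A B" and s: "s \<in> {m, n}" and \<rho>: "0 \<le> \<rho>" "\<rho> \<le> 1"
  shows "summable (\<lambda>k. C s k * A k * \<rho>^k)" and "summable (\<lambda>k. C s k * B k * \<rho>^k)"
proof -
  note c = coeff_condD[OF cond]
  have "\<rho>^k \<le> 1" for k using \<rho> by (simp add: power_le_one)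
  then have "0 \<le> C s k * X k * \<rho>^k \<and> C s k * X k * \<rho>^k \<le> C s k * X k" if "\<And>k. X k \<ge> 0" for X k
    using that[of k] C_pos[of s k] \<rho> by (simp add: mult_left_le)
  then have bound: "norm (C s k * A k * \<rho>^k) \<le> weighted A B k / (1 - eta)"
    "norm (C s k * B k * \<rho>^k) \<le> weighted A B k / (1 - eta)" for k
    using coeff_cond_C_bounds[OF cond s, of k] c(1,2) by (auto intro: order_trans)
  show "summable (\<lambda>k. C s k * A k * \<rho>^k)"
    by (rule summable_comparison_test'[OF summable_divide[OF c(8)] bound(1)])
  show "summable (\<lambda>k. C s k * B k * \<rho>^k)"
    by (rule summable_comparison_test'[OF summable_divide[OF c(8)] bound(2)])
qed

lemma coeff_cond_Phi_harm:
  assumes cond: "coeff_cond A B" and z: "z \<in> U" and s: "s \<in> {m, n}" and \<tau>: "(-1) ^ s * sg = of_real \<tau>"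
  shows "summable (\<lambda>k. of_real (C s k * A k) * z^k)" and "summable (\<lambda>k. of_real (C s k * B k) * cnj z ^ k)"
    and "Phi_harm al be ga de p q s (h_coeff A) (g_coeff B) z
       = z - (\<Sum>k. of_real (C s k * A k) * z^k) + of_real \<tau> * (\<Sum>k. of_real (C s k * B k) * cnj z ^ k)"
proof -
  note c = coeff_condD[OF cond]
  have norm_z: "norm z \<le> 1" using z by (simp add: U_def)
  note summable = coeff_cond_C_summable[OF cond s norm_ge_zero norm_z]
  have nonneg: "C s k * A k \<ge> 0" "C s k * B k \<ge> 0" for k
    using C_pos[of s k] c(1,2)[of k] by simp_all
  show summable_A: "summable (\<lambda>k. of_real (C s k * A k) * z^k)"
    using norm_real_powser_le(1)[of "\<lambda>k. C s k * A k" "norm z" z] summable(1) nonneg by simp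
  have summable_B: "summable (\<lambda>k. of_real (C s k * B k) * w^k)" if "norm w = norm z" for w :: complex
    using norm_real_powser_le(1)[of "\<lambda>k. C s k * B k" "norm z" w] summable(2) nonneg that by simp
  then show "summable (\<lambda>k. of_real (C s k * B k) * cnj z ^ k)" by simp
  have "(\<lambda>k. (if k = 1 then z else 0) - of_real (C s k * A k) * z^k) sums (z - (\<Sum>k. of_real (C s k * A k) * z^k))"
    using sums_single[of 1 "\<lambda>_. z"] summable_sums[OF summable_A] by (rule sums_diff)
  moreover have "(\<lambda>k. (if k = 1 then z else 0) - of_real (C s k * A k) * z^k)
      = (\<lambda>k. of_real (C s k) * h_coeff A k * z^k)"
    using c(4) by (auto simp: h_coeff_def C_le_1 algebra_simps)
  ultimately have h: "Phi_ps al be ga de p q s (h_coeff A) z = z - (\<Sum>k. of_real (C s k * A k) * z^k)"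
    by (simp add: Phi_ps_def sums_iff)
  have "(\<lambda>k. cnj (of_real (C s k * B k) * z^k)) sums cnj (\<Sum>k. of_real (C s k * B k) * z^k)"
    using summable_sums[OF summable_B[of z]] by (simp only: sums_cnj)
  then have "cnj (\<Sum>k. of_real (C s k * B k) * z^k) = (\<Sum>k. of_real (C s k * B k) * cnj z ^ k)"
    by (simp add: sums_iff)
  moreover have "Phi_ps al be ga de p q s (g_coeff B) z = sg * (\<Sum>k. of_real (C s k * B k) * z^k)"
    using suminf_mult[OF summable_B[of z], of sg]
    by (simp add: Phi_ps_def g_coeff_def algebra_simps)
  ultimately show "Phi_harm al be ga de p q s (h_coeff A) (g_coeff B) z
       = z - (\<Sum>k. of_real (C s k * A k) * z^k) + of_real \<tau> * (\<Sum>k. of_real (C s k * B k) * cnj z ^ k)"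
    by (simp add: Phi_harm_def h mult.assoc[symmetric] \<tau>)
qed

lemma coeff_cond_Re:
  assumes cond: "coeff_cond A B" and z: "z \<in> U" "z \<noteq> 0"
  shows "Re (Phi_harm al be ga de p q m (h_coeff A) (g_coeff B) z /
             Phi_harm al be ga de p q n (h_coeff A) (g_coeff B) z) > eta"
proof -
  note c = coeff_condD[OF cond]
  define \<rho> where "\<rho> = norm z"
  have \<rho>: "0 < \<rho>" "\<rho> < 1" using z by (auto simp: \<rho>_def U_def)
  define a where "a s = (\<Sum>k. of_real (C s k * A k) * z^k)" for s
  define b where "b s = (\<Sum>k. of_real (C s k * B k) * cnj z ^ k)" for s
  note m = coeff_cond_Phi_harm[OF cond z(1) _ sign_m, folded a_def b_def]
  note n = coeff_cond_Phi_harm[OF cond z(1) _ sign_n, folded a_def b_def]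
  note summable = coeff_cond_C_summable[OF cond _ norm_ge_zero, of _ z, folded \<rho>_def]
  define \<alpha> where "\<alpha> c k = (C m k + c * C n k) * A k" for c k
  define \<beta> where "\<beta> c k = (C m k + c * C n k) * B k" for c k
  have lincomb: "a m + of_real c * a n = (\<Sum>k. of_real (\<alpha> c k) * z^k)"
    "b m + of_real c * b n = (\<Sum>k. of_real (\<beta> c k) * cnj z ^ k)" for c
    using suminf_real_powser_lincomb[OF m(1) n(1)] suminf_real_powser_lincomb[OF m(2) n(2)]
    by (simp_all add: a_def b_def \<alpha>_def \<beta>_def algebra_simps)
  have summable_\<alpha>: "summable (\<lambda>k. \<alpha> c k * \<rho>^k)" and summable_\<beta>: "summable (\<lambda>k. \<beta> c k * \<rho>^k)" for c
    using summable_add[OF summable(1)[of m] summable_mult[OF summable(1)[of n], of c]]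
      summable_add[OF summable(2)[of m] summable_mult[OF summable(2)[of n], of c]] \<rho>
    by (simp_all add: \<alpha>_def \<beta>_def algebra_simps)
  have bound: "norm ((a m + of_real c * a n) + (b m + of_real d * b n)) \<le> (\<Sum>k. (\<alpha> c k + \<beta> d k) * \<rho>^k)"
    if "\<bar>c\<bar> \<le> 1" "\<bar>d\<bar> \<le> 1" for c d
    unfolding lincomb \<rho>_def
  proof (rule norm_mixed_real_powser_le)
    show "\<alpha> c k \<ge> 0" "\<beta> d k \<ge> 0" for k
      using C_plus_scaled_nonneg[OF that(1)] C_plus_scaled_nonneg[OF that(2)] c(1,2) by (simp_all add: \<alpha>_def \<beta>_def)
    show "summable (\<lambda>k. \<alpha> c k * norm z ^ k)" "summable (\<lambda>k. \<beta> d k * norm z ^ k)"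
      using summable_\<alpha> summable_\<beta> by (simp_all add: \<rho>_def)
  qed
  have eta_abs: "\<bar>1 - 2 * eta\<bar> \<le> 1" "\<bar>- ((1 - 2 * eta) * ep)\<bar> \<le> 1" "\<bar>-1 :: real\<bar> \<le> 1" "\<bar>ep\<bar> \<le> 1"
    using eta ep_cases by auto
  have summable_P: "summable (\<lambda>k. (\<alpha> (1 - 2 * eta) k + \<beta> (- ((1 - 2 * eta) * ep)) k) * \<rho>^k)"
    and summable_Q: "summable (\<lambda>k. (\<alpha> (-1) k + \<beta> ep k) * \<rho>^k)"
    using summable_add[OF summable_\<alpha> summable_\<beta>] by (simp_all add: distrib_right)
  have "norm (a m + of_real (1 - 2 * eta) * a n + b m - of_real ((1 - 2 * eta) * ep) * b n)
      + norm (a m - a n + b m + of_real ep * b n)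
      \<le> (\<Sum>k. (\<alpha> (1 - 2 * eta) k + \<beta> (- ((1 - 2 * eta) * ep)) k) * \<rho>^k) + (\<Sum>k. (\<alpha> (-1) k + \<beta> ep k) * \<rho>^k)"
    using add_mono[OF bound[OF eta_abs(1,2)] bound[OF eta_abs(3,4)]] by (simp add: algebra_simps)
  also have "\<dots> = (\<Sum>k. 2 * weighted A B k * \<rho>^k)"
    using suminf_add[OF summable_P summable_Q]
    by (simp add: \<alpha>_def \<beta>_def weighted_def wA_def wB_def algebra_simps)
  also have "\<dots> = 2 * (\<Sum>k. weighted A B k * \<rho>^k)"
    using suminf_mult[OF coeff_cond_weighted_powser_less(1)[OF cond \<rho>], of 2] by (simp add: mult.assoc)
  also have "\<dots> < 2 * (1 - eta) * \<rho>"
    using coeff_cond_weighted_powser_less(2)[OF cond \<rho>] by (simp add: algebra_simps)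
  finally show ?thesis
    using Re_quotient_gt[of eta] eta m(3) n(3) by (simp add: \<rho>_def)
qed

lemma coeff_cond_imp_SHbar:
  assumes cond: "coeff_cond A B"
  shows "SHbar al be ga de p q m n eta (harmonic_of A B)"
proof -
  note c = coeff_condD[OF cond]
  have "SH al be ga de p q m n eta (harmonic_of A B)"
    unfolding SH_def
  proof (intro exI conjI ballI)
    show "h_coeff A 0 = 0" "h_coeff A 1 = 1" "g_coeff B 0 = 0"
      using c(3,4,5) by (simp_all add: h_coeff_def g_coeff_def)
    show "cmod (g_coeff B 1) < 1"
      using coeff_cond_B1[OF cond] c(2)[of 1] by (simp add: g_coeff_def norm_mult)
    show "harmonic_of A B z = ps (h_coeff A) z + cnj (ps (g_coeff B) z)" for z
      by (simp add: harmonic_of_def)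
  qed (use coeff_cond_summable[OF cond] coeff_cond_inj_on[OF cond] coeff_cond_sense_preserving[OF cond]
         coeff_cond_Re[OF cond] in auto)
  moreover have "\<forall>k. A k \<ge> 0 \<and> B k \<ge> 0" using c(1,2) by simp
  ultimately show ?thesis
    unfolding SHbar_def using coeff_cond_SHbar_form[OF cond] by blast
qed

end

theorem theorem4p2:
  fixes al be ga de p q eta :: real and m n :: nat
    and f :: "nat \<Rightarrow> complex \<Rightarrow> complex" and t :: "nat \<Rightarrow> real"
  assumes "al > 0" "be > 0" "ga > 0" "de > 0" "p > 0" "q > 0" "q \<le> al + p"
    and "0 \<le> eta" "eta < 1" "m \<ge> 1" "m > n"
    and "\<And>j. SHbar al be ga de p q m n eta (f j)"
    and "\<And>j. t j \<ge> 0" and "t sums 1"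
  shows "SHbar al be ga de p q m n eta (\<lambda>z. \<Sum>j. complex_of_real (t j) * f j z)"
proof -
  interpret SH_setting al be ga de p q eta m n
    using assms by unfold_locales auto
  have "\<forall>j. \<exists>A B. coeff_cond A B \<and> (\<forall>z\<in>U. f j z = harmonic_of A B z)"
    by (metis SHbar_imp_coeff_cond assms(12))
  then obtain A B where cond: "\<And>j. coeff_cond (A j) (B j)"
    and f: "\<And>j z. z \<in> U \<Longrightarrow> f j z = harmonic_of (A j) (B j) z"
    by metis
  show ?thesis
  proof (rule SHbar_cong)
    show "SHbar al be ga de p q m n eta (harmonic_of (\<lambda>k. \<Sum>j. t j * A j k) (\<lambda>k. \<Sum>j. t j * B j k))"
      by (intro coeff_cond_imp_SHbar coeff_cond_convex cond assms(13,14))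
    show "(\<Sum>j. of_real (t j) * f j z) = harmonic_of (\<lambda>k. \<Sum>j. t j * A j k) (\<lambda>k. \<Sum>j. t j * B j k) z"
      if "z \<in> U" for z
      using harmonic_of_convex[OF cond assms(13,14) that] f[OF that] by (simp add: sums_iff)
  qed
qed

end
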